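(* Let $k \geq 3$ be an integer. For all integers $\Delta \geq 2$ and odd $\ell \geq 3$ there exists $n_0$ such that for all $n \geq n_0$ the following holds. Let $m = n/\ell + n/(\log n)^2$. Let $T$ be a tree on $n$ vertices with $\Delta_1(T) \leq \Delta$, and let $H$ be the $m$-blow-up of a $k$-uniform loose cycle of length $\ell$. Then there is an embedding $\psi$ of $T^{(k)}$ into $H$ such that for each cluster $X$ of $H$, \[ \frac{n}{\ell} - \frac{((\ell-1)(k-1)-1)n}{(\log n)^2} - (k-2) \leq |V(\psi(T^{(k)})) \cap X| \leq \frac{n}{\ell} + \frac{n}{(\log n)^2}. \]
   Context: Rounding is ignored: $m$ is treated as an integer. $\Delta_1(T)$ is the maximum vertex degree of $T$. The $k$-expansion $G^{(k)}$ of a graph $G$ is obtained by replacing each edge $uv$ by a $k$-edge consisting of $u$, $v$ and $k-2$ new vertices belonging to no other edge. A $k$-uniform loose cycle of length $\ell$ is the $k$-expansion of a graph cycle with $\ell$ edges (it has $\ell(k-1)$ vertices). For a $k$-graph $F$, its $m$-blow-up $F(m)$ is obtained by replacing each vertex $x$ by a set $V_x$ of $m$ vertices (the clusters) and each edge $\{x_1,\dots,x_k\}$ by the complete $k$-partite $k$-graph with parts $V_{x_1},\dots,V_{x_k}$. An embedding is an injective edge-preserving map. *)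

theory Defs
  imports Complex_Main
begin

definition is_graph :: "'a set \<Rightarrow> 'a set set \<Rightarrow> bool" where
  "is_graph V E \<longleftrightarrow> finite V \<and> (\<forall>e\<in>E. e \<subseteq> V \<and> card e = 2)"

definition is_walk :: "'a set \<Rightarrow> 'a set set \<Rightarrow> 'a list \<Rightarrow> bool" where
  "is_walk V E xs \<longleftrightarrow> xs \<noteq> [] \<and> set xs \<subseteq> V \<and>
     (\<forall>i. Suc i < length xs \<longrightarrow> {xs ! i, xs ! Suc i} \<in> E)"

definition graph_connected :: "'a set \<Rightarrow> 'a set set \<Rightarrow> bool" where
  "graph_connected V E \<longleftrightarrow>
     (\<forall>u\<in>V. \<forall>v\<in>V. \<exists>xs. is_walk V E xs \<and> hd xs = u \<and> last xs = v)"

definition is_graph_cycle :: "'a set \<Rightarrow> 'a set set \<Rightarrow> 'a list \<Rightarrow> bool" where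
  "is_graph_cycle V E xs \<longleftrightarrow> is_walk V E xs \<and> distinct xs \<and> length xs \<ge> 3 \<and>
     {last xs, hd xs} \<in> E"

definition is_tree :: "'a set \<Rightarrow> 'a set set \<Rightarrow> bool" where
  "is_tree V E \<longleftrightarrow> is_graph V E \<and> V \<noteq> {} \<and> graph_connected V E \<and>
     \<not> (\<exists>xs. is_graph_cycle V E xs)"

definition degree :: "'a set \<Rightarrow> 'a set set \<Rightarrow> 'a \<Rightarrow> nat" where
  "degree V E v = card {u\<in>V. {u, v} \<in> E}"

definition max_degree :: "'a set \<Rightarrow> 'a set set \<Rightarrow> nat" where
  "max_degree V E = Max (degree V E ` V)"

definition exp_verts :: "nat \<Rightarrow> 'a set \<Rightarrow> 'a set set \<Rightarrow> ('a + ('a set \<times> nat)) set" where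
  "exp_verts k V E = Inl ` V \<union> {Inr (e, i) | e i. e \<in> E \<and> i < k - 2}"

definition exp_edge :: "nat \<Rightarrow> 'a set \<Rightarrow> ('a + ('a set \<times> nat)) set" where
  "exp_edge k e = Inl ` e \<union> {Inr (e, i) | i. i < k - 2}"

definition exp_edges :: "nat \<Rightarrow> 'a set set \<Rightarrow> ('a + ('a set \<times> nat)) set set" where
  "exp_edges k E = exp_edge k ` E"

definition cycle_verts :: "nat \<Rightarrow> nat set" where
  "cycle_verts l = {..<l}"

definition cycle_edges :: "nat \<Rightarrow> nat set set" where
  "cycle_edges l = {{i, Suc i mod l} | i. i < l}"

definition loose_cycle_verts :: "nat \<Rightarrow> nat \<Rightarrow> (nat + (nat set \<times> nat)) set" where
  "loose_cycle_verts k l = exp_verts k (cycle_verts l) (cycle_edges l)"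

definition loose_cycle_edges :: "nat \<Rightarrow> nat \<Rightarrow> (nat + (nat set \<times> nat)) set set" where
  "loose_cycle_edges k l = exp_edges k (cycle_edges l)"

definition cluster :: "nat \<Rightarrow> 'b \<Rightarrow> ('b \<times> nat) set" where
  "cluster m x = {x} \<times> {..<m}"

definition blowup_verts :: "nat \<Rightarrow> 'b set \<Rightarrow> ('b \<times> nat) set" where
  "blowup_verts m W = W \<times> {..<m}"

text \<open>Each edge f is replaced by the complete |f|-partite hypergraph on its clusters.\<close>
definition blowup_edges :: "nat \<Rightarrow> 'b set set \<Rightarrow> ('b \<times> nat) set set" where
  "blowup_edges m F = {(\<lambda>x. (x, g x)) ` f | f g. f \<in> F \<and> (\<forall>x\<in>f. g x < m)}"

definition is_embedding ::
  "('a \<Rightarrow> 'b) \<Rightarrow> 'a set \<Rightarrow> 'a set set \<Rightarrow> 'b set \<Rightarrow> 'b set set \<Rightarrow> bool" where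
  "is_embedding \<psi> V1 E1 V2 E2 \<longleftrightarrow>
     \<psi> ` V1 \<subseteq> V2 \<and> inj_on \<psi> V1 \<and> (\<forall>f\<in>E1. \<psi> ` f \<in> E2)"

end

theory Submission
  imports Defs "HOL-Real_Asymp.Real_Asymp"
begin

text \<open>Root \<open>T\<close> and cut it at its heavy vertices for \<open>s = \<lceil>\<surd>n\<rceil>\<close>: there are \<open>O(\<surd>n)\<close> of them, and
  the piece hanging below each has \<open>O(\<Delta> s)\<close> vertices. Every piece is mapped to the cycle
  \<open>\<int>/l\<close> by a walk that starts next to the image of its parent and, \<open>l\<close> being odd, reaches a
  prescribed phase \<open>\<tau> t\<close> at depth \<open>l\<close>; beyond that depth a vertex at piece depth \<open>d\<close> sits at
  \<open>\<tau> t + d\<close>. Apart from the \<open>O(\<surd>n \<Delta>\<^sup>l)\<close> vertices near the tops of pieces, the number of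
  vertices (and of edges) sent to each position is therefore a sum of rotated piece profiles.
  Choosing the rotations greedily keeps the total squared deviation below
  \<open>\<Sum>\<^sub>t 2 l |piece t|\<^sup>2 = O(l \<Delta> n\<^sup>3\<^sup>/\<^sup>2)\<close>, so every position receives \<open>n/l \<plusminus> O(n\<^sup>3\<^sup>/\<^sup>4)\<close>
  vertices and edges, and \<open>n\<^sup>3\<^sup>/\<^sup>4 = o(n / log\<^sup>2 n)\<close>. This homomorphism \<open>T \<rightarrow> C\<^sub>l\<close> extends to
  the \<open>k\<close>-expansions, and numbering every fibre injectively turns it into an embedding of
  \<open>T\<^sup>(\<^sup>k\<^sup>)\<close> into the blow-up.\<close>

section \<open>Trees\<close>

lemma is_walk_iff_successively:
  "is_walk V E xs \<longleftrightarrow> xs \<noteq> [] \<and> set xs \<subseteq> V \<and> successively (\<lambda>a b. {a, b} \<in> E) xs"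
  unfolding is_walk_def successively_conv_nth by blast

lemma is_walk_suffix:
  assumes "is_walk V E (as @ zs)" "zs \<noteq> []"
  shows "is_walk V E zs"
  using assms unfolding is_walk_iff_successively by (auto simp: successively_append_iff)

lemma is_graph_edge_neq:
  assumes "is_graph V E" "{a, b} \<in> E"
  shows "a \<noteq> b"
  using assms unfolding is_graph_def by fastforce

lemma is_graph_edge_in_verts:
  assumes "is_graph V E" "{a, b} \<in> E"
  shows "a \<in> V" "b \<in> V"
  using assms unfolding is_graph_def by auto

lemma exists_longest_path:
  assumes G: "is_graph V E" and v: "v \<in> V"
  shows "\<exists>xs. is_walk V E xs \<and> distinct xs \<and>
          (\<forall>ys. is_walk V E ys \<and> distinct ys \<longrightarrow> length ys \<le> length xs)"
proof -
  have fin: "finite V" using G unfolding is_graph_def by simp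
  let ?P = "\<lambda>n. \<exists>xs. is_walk V E xs \<and> distinct xs \<and> length xs = n"
  have "?P 1" using v by (intro exI[of _ "[v]"]) (auto simp: is_walk_def)
  moreover have "n \<le> card V" if "?P n" for n
    using that fin by (metis card_mono distinct_card is_walk_def)
  ultimately obtain n where "?P n" "\<forall>m. ?P m \<longrightarrow> m \<le> n"
    using Nat.ex_has_greatest_nat[of ?P 1 "card V"] by blast
  then show ?thesis by blast
qed

text \<open>The last vertex of a longest path is a leaf: a second neighbour would either extend the
  path or close a cycle.\<close>
lemma is_tree_has_leaf:
  assumes T: "is_tree V E" and c: "card V \<ge> 2"
  shows "\<exists>x y. x \<in> V \<and> y \<in> V \<and> x \<noteq> y \<and> {x, y} \<in> E \<and> (\<forall>w. {w, x} \<in> E \<longrightarrow> w = y)"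
proof -
  have G: "is_graph V E" and C: "graph_connected V E" and NC: "\<not> (\<exists>xs. is_graph_cycle V E xs)"
    using T unfolding is_tree_def by auto
  have fin: "finite V" using G unfolding is_graph_def by simp
  obtain u v where uv: "u \<in> V" "v \<in> V" "u \<noteq> v"
    using c fin card_le_Suc0_iff_eq[OF fin] by force
  then obtain zs where zs: "is_walk V E zs" "hd zs = u" "last zs = v"
    using C unfolding graph_connected_def by blast
  have "length zs \<ge> 2"
    using zs uv unfolding is_walk_def by (cases zs; cases "tl zs") auto
  then have e01: "{zs ! 0, zs ! 1} \<in> E" using zs(1) unfolding is_walk_def by auto
  have edge_path: "is_walk V E [zs ! 0, zs ! 1] \<and> distinct [zs ! 0, zs ! 1]"
    using e01 is_graph_edge_neq[OF G e01] is_graph_edge_in_verts[OF G e01]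
    by (auto simp: is_walk_def less_Suc_eq)
  obtain xs where xs: "is_walk V E xs" "distinct xs"
    and longest: "\<forall>ys. is_walk V E ys \<and> distinct ys \<longrightarrow> length ys \<le> length xs"
    using exists_longest_path[OF G uv(1)] by blast
  have "length xs \<ge> 2" using longest edge_path by fastforce
  then obtain ys y x where xs_eq: "xs = ys @ [y, x]"
  proof -
    obtain ys' x where "xs = ys' @ [x]"
      using \<open>length xs \<ge> 2\<close> by (cases xs rule: rev_cases) auto
    moreover have "ys' \<noteq> []" using calculation \<open>length xs \<ge> 2\<close> by auto
    ultimately show ?thesis using that by (cases ys' rule: rev_cases) auto
  qed
  have "is_walk V E [y, x]" using is_walk_suffix xs(1) xs_eq by blast
  then have yx: "{y, x} \<in> E" "x \<in> V" "y \<in> V" unfolding is_walk_def by auto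
  have "w = y" if wx: "{w, x} \<in> E" for w
  proof (rule ccontr)
    assume wy: "w \<noteq> y"
    have wV: "w \<in> V" using is_graph_edge_in_verts[OF G wx] by simp
    have wnx: "w \<noteq> x" using is_graph_edge_neq[OF G wx] .
    show False
    proof (cases "w \<in> set xs")
      case False
      have "is_walk V E (xs @ [w])"
        using xs(1) wV wx unfolding is_walk_iff_successively
        by (auto simp: successively_append_iff xs_eq insert_commute)
      moreover have "distinct (xs @ [w])" using False xs(2) by simp
      ultimately show False using longest by fastforce
    next
      case True
      then obtain as bs where ys: "ys = as @ w # bs"
        using wy wnx xs_eq by (auto dest: split_list)
      let ?c = "w # bs @ [y, x]"
      have "is_walk V E ?c" using is_walk_suffix[of V E as ?c] xs(1) xs_eq ys by simp
      moreover have "distinct ?c" using xs(2) xs_eq ys by simp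
      moreover have "{last ?c, hd ?c} \<in> E" using wx by (simp add: insert_commute)
      ultimately show False using NC unfolding is_graph_cycle_def by fastforce
    qed
  qed
  moreover have "x \<noteq> y" using xs(2) xs_eq by auto
  ultimately show ?thesis using yx by (metis insert_commute)
qed

lemma is_walk_skip_leaf:
  assumes walk: "is_walk V E (as @ x # b # bs)" and as: "as \<noteq> []"
    and leaf: "\<forall>w. {w, x} \<in> E \<longrightarrow> w = y"
  shows "last as = b" and "is_walk V E (as @ bs)"
proof -
  have succ: "successively (\<lambda>a b. {a, b} \<in> E) (as @ x # b # bs)"
    using walk unfolding is_walk_iff_successively by simp
  then have "{last as, x} \<in> E" "{x, b} \<in> E"
    using as by (simp_all add: successively_append_iff)
  then show "last as = b" using leaf by (metis insert_commute)
  moreover have "successively (\<lambda>a b. {a, b} \<in> E) as" "successively (\<lambda>a b. {a, b} \<in> E) (b # bs)"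
    using succ by (simp_all add: successively_append_iff)
  ultimately have "successively (\<lambda>a b. {a, b} \<in> E) (as @ bs)"
    using as by (cases bs) (simp_all add: successively_append_iff)
  then show "is_walk V E (as @ bs)" using walk as unfolding is_walk_iff_successively by auto
qed

lemma is_tree_remove_leaf:
  assumes T: "is_tree V E" and x: "x \<in> V" "y \<in> V" "x \<noteq> y" "{x, y} \<in> E"
    and leaf: "\<forall>w. {w, x} \<in> E \<longrightarrow> w = y"
  shows "is_tree (V - {x}) (E - {{x, y}})"
proof -
  have G: "is_graph V E" and C: "graph_connected V E" and NC: "\<not> (\<exists>xs. is_graph_cycle V E xs)"
    using T unfolding is_tree_def by auto
  have x_notin: "x \<notin> e" if e: "e \<in> E - {{x, y}}" for e
  proof
    assume "x \<in> e"
    have "card e = 2" using G e unfolding is_graph_def by auto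
    then obtain a b where "e = {a, b}" "a \<noteq> b" by (meson card_2_iff)
    then have "e = {x, if a = x then b else a}" using \<open>x \<in> e\<close> by auto
    moreover have "{if a = x then b else a, x} \<in> E" using e calculation
      by (simp add: insert_commute)
    ultimately show False using leaf e by auto
  qed
  have G': "is_graph (V - {x}) (E - {{x, y}})"
    using G x_notin unfolding is_graph_def by auto
  have C': "graph_connected (V - {x}) (E - {{x, y}})"
    unfolding graph_connected_def
  proof (intro ballI)
    fix u v assume u: "u \<in> V - {x}" and v: "v \<in> V - {x}"
    let ?P = "\<lambda>zs. is_walk V E zs \<and> hd zs = u \<and> last zs = v"
    obtain zs0 where "?P zs0" using C u v unfolding graph_connected_def by blast
    then obtain zs where zs: "?P zs" and shortest: "\<forall>ws. ?P ws \<longrightarrow> length zs \<le> length ws"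
      using ex_has_least_nat[of ?P zs0 length] by blast
    have "x \<notin> set zs"
    proof
      assume "x \<in> set zs"
      then obtain as bs where zs_eq: "zs = as @ x # bs" by (meson split_list)
      have "as \<noteq> []" "bs \<noteq> []" using zs zs_eq u v by auto
      then obtain b bs' where bs: "bs = b # bs'" by (cases bs) auto
      have "is_walk V E (as @ x # b # bs')" using zs zs_eq bs by simp
      note skip = is_walk_skip_leaf[OF this \<open>as \<noteq> []\<close> leaf]
      have "last (as @ bs') = v" using zs skip(1) unfolding zs_eq bs by (cases "bs' = []") auto
      then have "?P (as @ bs')" using skip(2) zs \<open>as \<noteq> []\<close> unfolding zs_eq by simp
      then show False using shortest[rule_format, of "as @ bs'"] zs_eq bs by simp
    qed
    then have "is_walk (V - {x}) (E - {{x, y}}) zs"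
      using zs unfolding is_walk_iff_successively
      by (auto elim!: successively_mono simp: doubleton_eq_iff)
    then show "\<exists>xs. is_walk (V - {x}) (E - {{x, y}}) xs \<and> hd xs = u \<and> last xs = v"
      using zs by blast
  qed
  have "is_graph_cycle V E xs" if "is_graph_cycle (V - {x}) (E - {{x, y}}) xs" for xs
    using that unfolding is_graph_cycle_def is_walk_iff_successively
    by (auto elim!: successively_mono)
  then have NC': "\<not> (\<exists>xs. is_graph_cycle (V - {x}) (E - {{x, y}}) xs)" using NC by blast
  have "V - {x} \<noteq> {}" using x by auto
  then show ?thesis using G' C' NC' unfolding is_tree_def by blast
qed

lemma is_tree_rooted:
  assumes "is_tree V E"
  shows "\<exists>r par (depth :: 'a \<Rightarrow> nat). r \<in> V \<and> depth r = 0 \<and>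
           (\<forall>v\<in>V - {r}. par v \<in> V \<and> depth v = Suc (depth (par v))) \<and>
           E = (\<lambda>v. {v, par v}) ` (V - {r})"
  using assms
proof (induction "card V" arbitrary: V E rule: less_induct)
  case less
  have G: "is_graph V E" and ne: "V \<noteq> {}" using less.prems unfolding is_tree_def by auto
  have fin: "finite V" using G unfolding is_graph_def by simp
  show ?case
  proof (cases "card V \<ge> 2")
    case False
    moreover have "card V > 0" using fin ne by (simp add: card_gt_0_iff)
    ultimately have "card V = Suc 0" by linarith
    then obtain r where V: "V = {r}" unfolding card_1_singleton_iff by blast
    have "E = {}"
    proof (rule ccontr)
      assume "E \<noteq> {}"
      then obtain e where "e \<subseteq> V" "card e = 2" using G unfolding is_graph_def by auto
      then show False using card_mono[OF fin, of e] V by simp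
    qed
    then show ?thesis using V by (intro exI[of _ r] exI[of _ id] exI[of _ "\<lambda>_. 0::nat"]) simp
  next
    case True
    obtain x y where xy: "x \<in> V" "y \<in> V" "x \<noteq> y" "{x, y} \<in> E"
      and leaf: "\<forall>w. {w, x} \<in> E \<longrightarrow> w = y"
      using is_tree_has_leaf[OF less.prems True] by blast
    have "card (V - {x}) < card V" using card_Diff1_less[OF fin xy(1)] .
    then obtain r par and depth :: "'a \<Rightarrow> nat" where
      r: "r \<in> V - {x}" "depth r = 0"
      and par: "\<forall>v\<in>V - {x} - {r}. par v \<in> V - {x} \<and> depth v = Suc (depth (par v))"
      and E': "E - {{x, y}} = (\<lambda>v. {v, par v}) ` (V - {x} - {r})"
      using less.hyps is_tree_remove_leaf[OF less.prems xy leaf] by meson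
    define par' where "par' = par(x := y)"
    define depth' where "depth' = depth(x := Suc (depth y))"
    have "par' v \<in> V \<and> depth' v = Suc (depth' (par' v))" if "v \<in> V - {r}" for v
      using that xy r par by (cases "v = x") (auto simp: par'_def depth'_def)
    moreover have "E = (\<lambda>v. {v, par' v}) ` (V - {r})"
    proof -
      have "(\<lambda>v. {v, par' v}) ` (V - {x} - {r}) = E - {{x, y}}"
        unfolding E' par'_def by (rule image_cong) auto
      moreover have "V - {r} = insert x (V - {x} - {r})" using xy(1) r(1) by auto
      ultimately show ?thesis using xy(4) by (auto simp: par'_def)
    qed
    ultimately show ?thesis using r
      by (intro exI[of _ r] exI[of _ par'] exI[of _ depth']) (auto simp: depth'_def)
  qed
qed

section \<open>Homomorphisms, expansions and blow-ups\<close>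

definition is_homomorphism ::
  "('a \<Rightarrow> 'b) \<Rightarrow> 'a set \<Rightarrow> 'a set set \<Rightarrow> 'b set \<Rightarrow> 'b set set \<Rightarrow> bool" where
  "is_homomorphism h V1 E1 V2 E2 \<longleftrightarrow> h ` V1 \<subseteq> V2 \<and> (\<forall>f\<in>E1. inj_on h f \<and> h ` f \<in> E2)"

text \<open>The embedding numbers each fibre of \<open>h\<close> injectively by \<open>{..<m}\<close>.\<close>
lemma exists_blowup_embedding:
  assumes fin: "finite V1" and edges_sub: "\<And>f. f \<in> E1 \<Longrightarrow> f \<subseteq> V1"
    and hom: "is_homomorphism h V1 E1 V2 E2"
    and fibre: "\<And>w. w \<in> V2 \<Longrightarrow> card {x\<in>V1. h x = w} \<le> m"
  shows "\<exists>\<psi>. is_embedding \<psi> V1 E1 (blowup_verts m V2) (blowup_edges m E2) \<and>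
             (\<forall>w\<in>V2. card (\<psi> ` V1 \<inter> cluster m w) = card {x\<in>V1. h x = w})"
proof -
  define F where "F w = {x\<in>V1. h x = w}" for w
  have "\<exists>g. bij_betw g (F w) {..<card (F w)}" for w
    using ex_bij_betw_finite_nat[of "F w"] fin by (simp add: F_def atLeast0LessThan)
  then obtain g where g: "\<And>w. bij_betw (g w) (F w) {..<card (F w)}" by metis
  define \<psi> where "\<psi> x = (h x, g (h x) x)" for x
  have h_V2: "h x \<in> V2" if "x \<in> V1" for x using hom that unfolding is_homomorphism_def by blast
  have g_lt: "g (h x) x < m" if "x \<in> V1" for x
  proof -
    have "g (h x) x < card (F (h x))" using bij_betwE[OF g] that unfolding F_def by blast
    then show ?thesis using fibre[OF h_V2[OF that]] unfolding F_def by simp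
  qed
  have inj: "inj_on \<psi> V1"
  proof (rule inj_onI)
    fix x y assume "x \<in> V1" "y \<in> V1" "\<psi> x = \<psi> y"
    then have "x \<in> F (h x)" "y \<in> F (h x)" "g (h x) x = g (h x) y" unfolding \<psi>_def F_def by auto
    then show "x = y" using bij_betw_imp_inj_on[OF g] by (meson inj_onD)
  qed
  have edges: "\<psi> ` f \<in> blowup_edges m E2" if f: "f \<in> E1" for f
  proof -
    have inj_f: "inj_on h f" and "h ` f \<in> E2" using hom f unfolding is_homomorphism_def by auto
    define G where "G w = g w (inv_into f h w)" for w
    have "\<psi> ` f = (\<lambda>w. (w, G w)) ` (h ` f)"
      unfolding \<psi>_def G_def image_image using inv_into_f_f[OF inj_f] by (intro image_cong) auto
    moreover have "G w < m" if "w \<in> h ` f" for w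
      using that g_lt edges_sub[OF f] inv_into_f_f[OF inj_f] unfolding G_def by auto
    ultimately show ?thesis unfolding blowup_edges_def using \<open>h ` f \<in> E2\<close> by blast
  qed
  have "\<psi> ` V1 \<inter> cluster m w = \<psi> ` F w" for w
    unfolding cluster_def F_def \<psi>_def using g_lt by auto
  moreover have "inj_on \<psi> (F w)" for w using inj unfolding F_def by (rule inj_on_subset) auto
  ultimately have "card (\<psi> ` V1 \<inter> cluster m w) = card (F w)" for w by (simp add: card_image)
  moreover have "\<psi> ` V1 \<subseteq> blowup_verts m V2" unfolding blowup_verts_def \<psi>_def using h_V2 g_lt
    by auto
  ultimately show ?thesis using inj edges unfolding is_embedding_def F_def by blast
qed

definition exp_map :: "('a \<Rightarrow> 'b) \<Rightarrow> 'a + 'a set \<times> nat \<Rightarrow> 'b + 'b set \<times> nat" where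
  "exp_map \<phi> = map_sum \<phi> (\<lambda>(e, i). (\<phi> ` e, i))"

lemma exp_map_simps [simp]:
  "exp_map \<phi> (Inl v) = Inl (\<phi> v)"
  "exp_map \<phi> (Inr (e, i)) = Inr (\<phi> ` e, i)"
  unfolding exp_map_def by simp_all

lemma exp_edge_eq: "exp_edge k e = Inl ` e \<union> (\<lambda>i. Inr (e, i)) ` {..<k - 2}"
  unfolding exp_edge_def by auto

lemma finite_exp_verts:
  assumes "finite V" "finite E"
  shows "finite (exp_verts k V E)"
proof -
  have "{Inr (e, i) | e i. e \<in> E \<and> i < k - 2} \<subseteq> (\<lambda>(e, i). Inr (e, i)) ` (E \<times> {..<k - 2})"
    by auto
  then have "finite {Inr (e, i) | e i. e \<in> E \<and> i < k - 2}"
    by (rule finite_subset) (use assms in simp)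
  then show ?thesis using assms unfolding exp_verts_def by simp
qed

lemma exp_edges_subset:
  assumes "\<And>e. e \<in> E \<Longrightarrow> e \<subseteq> V" "f \<in> exp_edges k E"
  shows "f \<subseteq> exp_verts k V E"
  using assms unfolding exp_edges_def exp_edge_def exp_verts_def by blast

lemma exp_map_exp_edge: "exp_map \<phi> ` exp_edge k e = exp_edge k (\<phi> ` e)"
  unfolding exp_edge_eq by (simp add: image_Un image_image)

lemma exp_map_homomorphism:
  assumes verts: "\<phi> ` V1 \<subseteq> V2" and edges: "\<And>e. e \<in> E1 \<Longrightarrow> inj_on \<phi> e \<and> \<phi> ` e \<in> E2"
  shows "is_homomorphism (exp_map \<phi>) (exp_verts k V1 E1) (exp_edges k E1)
           (exp_verts k V2 E2) (exp_edges k E2)"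
proof -
  have "exp_map \<phi> ` exp_verts k V1 E1 \<subseteq> exp_verts k V2 E2"
    using verts edges unfolding exp_verts_def by auto
  moreover have "inj_on (exp_map \<phi>) (exp_edge k e)" if e: "e \<in> E1" for e
  proof (rule inj_onI)
    fix y z assume "y \<in> exp_edge k e" "z \<in> exp_edge k e" "exp_map \<phi> y = exp_map \<phi> z"
    then show "y = z" using edges[OF e] unfolding exp_edge_eq by (auto dest: inj_onD)
  qed
  moreover have "exp_map \<phi> ` exp_edge k e \<in> exp_edges k E2" if "e \<in> E1" for e
    using edges[OF that] unfolding exp_map_exp_edge exp_edges_def by blast
  ultimately show ?thesis unfolding is_homomorphism_def exp_edges_def by blast
qed

lemma card_exp_map_fibre_Inl:
  "card {y \<in> exp_verts k V E. exp_map \<phi> y = Inl w} = card {v\<in>V. \<phi> v = w}"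
proof -
  have "{y \<in> exp_verts k V E. exp_map \<phi> y = Inl w} = Inl ` {v\<in>V. \<phi> v = w}"
    unfolding exp_verts_def by auto
  then show ?thesis by (simp add: card_image)
qed

lemma card_exp_map_fibre_Inr:
  assumes "i < k - 2"
  shows "card {y \<in> exp_verts k V E. exp_map \<phi> y = Inr (f, i)} = card {e\<in>E. \<phi> ` e = f}"
proof -
  have "{y \<in> exp_verts k V E. exp_map \<phi> y = Inr (f, i)} = (\<lambda>e. Inr (e, i)) ` {e\<in>E. \<phi> ` e = f}"
    using assms unfolding exp_verts_def by auto
  moreover have "inj (\<lambda>e. Inr (e, i) :: 'a + 'a set \<times> nat)" by (rule injI) simp
  ultimately show ?thesis by (simp add: card_image inj_on_subset)
qed

section \<open>Rooted trees and heavy vertices\<close>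

locale rooted_tree =
  fixes V :: "'a set" and r :: 'a and par :: "'a \<Rightarrow> 'a" and depth :: "'a \<Rightarrow> nat"
  assumes finite_V: "finite V" and root_in_V: "r \<in> V" and depth_root: "depth r = 0"
    and par_in_V: "\<And>v. v \<in> V \<Longrightarrow> v \<noteq> r \<Longrightarrow> par v \<in> V"
    and depth_par: "\<And>v. v \<in> V \<Longrightarrow> v \<noteq> r \<Longrightarrow> depth v = Suc (depth (par v))"
begin

definition children :: "'a \<Rightarrow> 'a set" where "children v = {c \<in> V. c \<noteq> r \<and> par c = v}"

definition anc :: "nat \<Rightarrow> 'a \<Rightarrow> 'a" where "anc i v = (par ^^ i) v"

definition subtree :: "'a \<Rightarrow> 'a set" where
  "subtree v = {w \<in> V. depth v \<le> depth w \<and> anc (depth w - depth v) w = v}"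

lemma finite_children: "finite (children v)"
  unfolding children_def using finite_V by simp

lemma children_in_V: "c \<in> children v \<Longrightarrow> c \<in> V"
  and par_children: "c \<in> children v \<Longrightarrow> par c = v"
  unfolding children_def by auto

lemma depth_children: "c \<in> children v \<Longrightarrow> depth c = Suc (depth v)"
  unfolding children_def using depth_par by auto

lemma in_children_par: "c \<in> V \<Longrightarrow> c \<noteq> r \<Longrightarrow> c \<in> children (par c)"
  unfolding children_def by auto

lemma depth_eq_0_root: "v \<in> V \<Longrightarrow> depth v = 0 \<Longrightarrow> v = r"
  using depth_par by fastforce

lemma anc_0[simp]: "anc 0 v = v" unfolding anc_def by simp

lemma anc_Suc: "anc (Suc i) v = par (anc i v)" unfolding anc_def by simp

lemma anc_Suc_right: "anc (Suc i) v = anc i (par v)" unfolding anc_def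
  by (simp only: funpow_Suc_right comp_apply)

lemma anc_in_V: "v \<in> V \<Longrightarrow> i \<le> depth v \<Longrightarrow> anc i v \<in> V \<and> depth (anc i v) = depth v - i"
proof (induction i)
  case 0
  then show ?case by simp
next
  case (Suc i)
  then have IH: "anc i v \<in> V" "depth (anc i v) = depth v - i" by auto
  then have "anc i v \<noteq> r" using Suc.prems depth_root by auto
  then have "par (anc i v) \<in> V" "depth (anc i v) = Suc (depth (par (anc i v)))"
    using par_in_V depth_par IH(1) by auto
  then show ?case using IH(2) by (simp add: anc_Suc)
qed

lemma anc_depth: "v \<in> V \<Longrightarrow> anc (depth v) v = r"
  using anc_in_V[of v "depth v"] depth_eq_0_root by auto

lemma subtree_self: "v \<in> V \<Longrightarrow> v \<in> subtree v"
  unfolding subtree_def by simp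

lemma subtree_in_V: "w \<in> subtree v \<Longrightarrow> w \<in> V"
  unfolding subtree_def by simp

lemma depth_le_subtree: "w \<in> subtree v \<Longrightarrow> depth v \<le> depth w"
  unfolding subtree_def by simp

lemma subtree_par:
  assumes "w \<in> subtree c" "w \<noteq> c"
  shows "w \<noteq> r" "par w \<in> subtree c"
proof -
  have w: "w \<in> V" "depth c \<le> depth w" "anc (depth w - depth c) w = c" using assms(1)
    unfolding subtree_def by auto
  have "depth w \<noteq> depth c" using w assms(2) by auto
  then have lt: "depth c < depth w" using w by simp
  then show "w \<noteq> r" using depth_root by auto
  then have pw: "par w \<in> V" "depth w = Suc (depth (par w))" using par_in_V depth_par w by auto
  have "depth w - depth c = Suc (depth (par w) - depth c)" using pw lt by simp
  then have "anc (depth (par w) - depth c) (par w) = c" using w(3) anc_Suc_right by metis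
  then show "par w \<in> subtree c" using pw lt unfolding subtree_def by simp
qed

lemma subtree_rec:
  assumes v: "v \<in> V"
  shows "subtree v = insert v (\<Union>c\<in>children v. subtree c)"
proof
  show "subtree v \<subseteq> insert v (\<Union>c\<in>children v. subtree c)"
  proof
    fix w assume w: "w \<in> subtree v"
    show "w \<in> insert v (\<Union>c\<in>children v. subtree c)"
    proof (cases "w = v")
      case False
      have wv: "w \<in> V" "depth v \<le> depth w" "anc (depth w - depth v) w = v" using w
        unfolding subtree_def by auto
      then have lt: "depth v < depth w" using False
        by (metis anc_0 diff_is_0_eq le_neq_implies_less)
      define c where "c = anc (depth w - depth v - 1) w"
      have cV: "c \<in> V" "depth c = Suc (depth v)"
        using anc_in_V[OF wv(1), of "depth w - depth v - 1"] lt
        unfolding c_def by auto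
      have "par c = v" using wv(3) lt unfolding c_def
        by (metis Suc_diff_1 anc_Suc zero_less_diff)
      then have "c \<in> children v" using cV depth_root unfolding children_def by auto
      moreover have "w \<in> subtree c" unfolding subtree_def using wv cV lt c_def
        by (simp add: Suc_le_eq)
      ultimately show ?thesis by blast
    qed simp
  qed
next
  show "insert v (\<Union>c\<in>children v. subtree c) \<subseteq> subtree v"
  proof
    fix w assume w: "w \<in> insert v (\<Union>c\<in>children v. subtree c)"
    show "w \<in> subtree v"
    proof (cases "w = v")
      case True then show ?thesis using subtree_self v by simp
    next
      case False
      then obtain c where c: "c \<in> children v" "w \<in> subtree c" using w by blast
      have wc: "w \<in> V" "depth c \<le> depth w" "anc (depth w - depth c) w = c" using c(2)
        unfolding subtree_def by auto
      have dc: "depth c = Suc (depth v)" using depth_children c(1) .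
      have "depth w - depth v = Suc (depth w - depth c)" using dc wc(2) by simp
      then have "anc (depth w - depth v) w = par c" using wc(3) anc_Suc by simp
      then show ?thesis using par_children[OF c(1)] wc dc unfolding subtree_def by simp
    qed
  qed
qed

lemma subtree_children_disjoint:
  assumes "c \<in> children v" "c' \<in> children v" "c \<noteq> c'"
  shows "subtree c \<inter> subtree c' = {}"
proof (rule ccontr)
  assume "subtree c \<inter> subtree c' \<noteq> {}"
  then obtain w where w: "w \<in> subtree c" "w \<in> subtree c'" by blast
  have "depth c = depth c'" using depth_children assms by simp
  then show False using w assms(3) unfolding subtree_def by auto
qed

lemma not_in_subtree_children: "c \<in> children v \<Longrightarrow> v \<notin> subtree c"
  using depth_children depth_le_subtree by fastforce

lemma finite_subtree: "finite (subtree v)"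
  using finite_V unfolding subtree_def by simp

lemma card_subtree: "v \<in> V \<Longrightarrow> card (subtree v) = Suc (\<Sum>c\<in>children v. card (subtree c))"
proof -
  assume v: "v \<in> V"
  have "card (\<Union>c\<in>children v. subtree c) = (\<Sum>c\<in>children v. card (subtree c))"
    by (rule card_UN_disjoint)
      (use finite_children finite_subtree subtree_children_disjoint in auto)
  moreover have "v \<notin> (\<Union>c\<in>children v. subtree c)" using not_in_subtree_children by blast
  ultimately show ?thesis using subtree_rec[OF v] finite_subtree
    by (metis card_insert_disjoint finite_UN_I finite_children)
qed

lemma children_induct[consumes 1]:
  assumes "v \<in> V" and step: "\<And>v. v \<in> V \<Longrightarrow> (\<And>c. c \<in> children v \<Longrightarrow> P c) \<Longrightarrow> P v"
  shows "P v"
  using assms(1)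
proof (induction "Max (depth ` V) - depth v" arbitrary: v rule: less_induct)
  case less
  show ?case
  proof (rule step[OF less.prems])
    fix c assume c: "c \<in> children v"
    have "depth c \<le> Max (depth ` V)" using children_in_V[OF c] finite_V by simp
    then show "P c" using less.hyps[OF _ children_in_V[OF c]] depth_children[OF c] by simp
  qed
qed

lemma parent_induct[consumes 1]:
  assumes "v \<in> V" and step: "\<And>v. v \<in> V \<Longrightarrow> (v \<noteq> r \<Longrightarrow> P (par v)) \<Longrightarrow> P v"
  shows "P v"
  using assms(1)
proof (induction "depth v" arbitrary: v rule: less_induct)
  case less
  show ?case
    using step[OF less.prems] less.hyps[OF _ par_in_V] depth_par less.prems by simp
qed

lemma subtree_root: "subtree r = V"
  unfolding subtree_def using anc_depth depth_root by auto

definition quota :: "nat \<Rightarrow> 'a \<Rightarrow> nat" where "quota s v = card (subtree v) div s"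

text \<open>Cutting at the heavy vertices, where the quota of a subtree is not fully passed on to the
  children, leaves pieces of size \<open>O(\<Delta> s)\<close> (\<open>card_piece_le\<close>), while the quotas telescope to
  at most \<open>n div s\<close> heavy vertices besides the root (\<open>card_heavy_le\<close>).\<close>
definition heavy :: "nat \<Rightarrow> 'a set" where
  "heavy s = {v \<in> V. v = r \<or> (\<Sum>c\<in>children v. quota s c) < quota s v}"

lemma sum_quota_children_le:
  assumes v: "v \<in> V" and s: "s > 0"
  shows "(\<Sum>c\<in>children v. quota s c) \<le> quota s v"
proof -
  have "(\<Sum>c\<in>children v. quota s c) * s = (\<Sum>c\<in>children v. quota s c * s)"
    by (simp add: sum_distrib_right)
  also have "\<dots> \<le> (\<Sum>c\<in>children v. card (subtree c))"
    by (rule sum_mono) (simp add: quota_def)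
  also have "\<dots> \<le> card (subtree v)" using card_subtree[OF v] by simp
  finally show ?thesis unfolding quota_def using less_eq_div_iff_mult_less_eq[OF s] by blast
qed

lemma sum_children_eq:
  "(\<Sum>v\<in>V. \<Sum>c\<in>children v. f c) = (\<Sum>c\<in>V - {r}. (f c :: nat))"
proof -
  have "(\<Sum>v\<in>V. \<Sum>c\<in>{x. x \<in> V - {r} \<and> par x = v}. f c) = (\<Sum>c\<in>V - {r}. f c)"
    by (rule sum.group) (use finite_V par_in_V in auto)
  moreover have "{x. x \<in> V - {r} \<and> par x = v} = children v" for v unfolding children_def by auto
  ultimately show ?thesis by simp
qed

lemma card_heavy_le:
  assumes s: "s > 0"
  shows "card (heavy s - {r}) \<le> card V div s"
proof -
  define g where "g v = quota s v - (\<Sum>c\<in>children v. quota s c)" for v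
  have gq: "v \<in> V \<Longrightarrow> g v + (\<Sum>c\<in>children v. quota s c) = quota s v" for v
    using sum_quota_children_le[OF _ s] unfolding g_def by simp
  have "(\<Sum>v\<in>V. g v) + (\<Sum>v\<in>V. \<Sum>c\<in>children v. quota s c) = (\<Sum>v\<in>V. quota s v)"
    using gq by (simp add: sum.distrib[symmetric])
  also have "\<dots> = quota s r + (\<Sum>v\<in>V - {r}. quota s v)"
    using finite_V root_in_V by (simp add: sum.remove)
  finally have sg: "(\<Sum>v\<in>V. g v) = quota s r" using sum_children_eq[of "quota s"] by simp
  have "card (heavy s - {r}) = (\<Sum>v\<in>heavy s - {r}. 1)" by simp
  also have "\<dots> \<le> (\<Sum>v\<in>heavy s - {r}. g v)"
    by (rule sum_mono) (auto simp: heavy_def g_def)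
  also have "\<dots> \<le> (\<Sum>v\<in>V. g v)"
    by (rule sum_mono2) (use finite_V in \<open>auto simp: heavy_def\<close>)
  finally show ?thesis using sg subtree_root unfolding quota_def by simp
qed

lemma heavy_subset: "heavy s \<subseteq> V" and root_in_heavy: "r \<in> heavy s"
  unfolding heavy_def using root_in_V by auto


lemma par_edge_inj:
  assumes "w \<in> V" "w \<noteq> r" "w' \<in> V" "w' \<noteq> r" and eq: "{w, par w} = {w', par w'}"
  shows "w = w'"
proof (rule ccontr)
  assume "w \<noteq> w'"
  then have "w = par w'" "w' = par w" using eq by (auto simp: doubleton_eq_iff)
  then show False using depth_par[OF assms(1,2)] depth_par[OF assms(3,4)] by simp
qed

lemma card_par_edges_filter:
  "card {e \<in> (\<lambda>v. {v, par v}) ` (V - {r}). P e} = card {w\<in>V. w \<noteq> r \<and> P {w, par w}}"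
proof -
  have "{e \<in> (\<lambda>v. {v, par v}) ` (V - {r}). P e} = (\<lambda>v. {v, par v}) ` {w\<in>V. w \<noteq> r \<and> P {w, par w}}"
    by auto
  moreover have "inj_on (\<lambda>v. {v, par v}) {w\<in>V. w \<noteq> r \<and> P {w, par w}}"
    by (rule inj_onI) (use par_edge_inj in auto)
  ultimately show ?thesis by (simp add: card_image)
qed

lemma card_V_pos: "card V > 0"
  using finite_V root_in_V card_gt_0_iff by blast

lemma card_children_le_max_degree:
  assumes "v \<in> V"
  shows "card (children v) \<le> max_degree V ((\<lambda>v. {v, par v}) ` (V - {r}))"
proof -
  have "children v \<subseteq> {u \<in> V. {u, v} \<in> (\<lambda>v. {v, par v}) ` (V - {r})}"
    unfolding children_def by auto
  then have "card (children v) \<le> degree V ((\<lambda>v. {v, par v}) ` (V - {r})) v"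
    unfolding degree_def by (intro card_mono) (use finite_V in auto)
  also have "\<dots> \<le> max_degree V ((\<lambda>v. {v, par v}) ` (V - {r}))"
    unfolding max_degree_def using finite_V assms by (intro Max_ge) auto
  finally show ?thesis .
qed

end

locale bounded_rooted_tree = rooted_tree +
  fixes \<Delta> :: nat
  assumes card_children_le: "v \<in> V \<Longrightarrow> card (children v) \<le> \<Delta>"

locale tree_cut = bounded_rooted_tree +
  fixes K :: "'a set"
  assumes K_subset: "K \<subseteq> V" and root_in_K: "r \<in> K"
begin

definition piece_depth :: "'a \<Rightarrow> nat" where "piece_depth w = (LEAST i. anc i w \<in> K)"
definition piece_top :: "'a \<Rightarrow> 'a" where "piece_top w = anc (piece_depth w) w"

lemma anc_depth_in_K: "w \<in> V \<Longrightarrow> anc (depth w) w \<in> K"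
  using anc_depth root_in_K by simp

lemma piece_depth_le: "w \<in> V \<Longrightarrow> piece_depth w \<le> depth w"
  unfolding piece_depth_def using anc_depth_in_K by (simp add: Least_le)

lemma piece_top_in_K: "w \<in> V \<Longrightarrow> piece_top w \<in> K"
  unfolding piece_top_def piece_depth_def using anc_depth_in_K by (rule LeastI)

lemma piece_depth_K: "w \<in> K \<Longrightarrow> piece_depth w = 0"
  unfolding piece_depth_def by simp

lemma piece_top_K: "w \<in> K \<Longrightarrow> piece_top w = w"
  unfolding piece_top_def using piece_depth_K by simp

lemma piece_depth_not_K:
  assumes w: "w \<in> V" "w \<notin> K"
  shows "w \<noteq> r" "piece_depth w = Suc (piece_depth (par w))" "piece_top w = piece_top (par w)"
    "par w \<in> V"
proof -
  show wr: "w \<noteq> r" using w root_in_K by blast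
  show pw: "par w \<in> V" using par_in_V w wr by blast
  have "(LEAST i. anc i w \<in> K) = Suc (LEAST m. anc (Suc m) w \<in> K)"
    by (rule Least_Suc[of "\<lambda>i. anc i w \<in> K" "depth w", OF anc_depth_in_K[OF w(1)]]) (use w in simp)
  then show pdw: "piece_depth w = Suc (piece_depth (par w))" unfolding piece_depth_def
    by (simp add: anc_Suc_right)
  show "piece_top w = piece_top (par w)" unfolding piece_top_def pdw by (simp add: anc_Suc_right)
qed

lemma depth_piece_top: "w \<in> V \<Longrightarrow> depth (piece_top w) + piece_depth w = depth w"
  unfolding piece_top_def using anc_in_V piece_depth_le by simp

lemma in_subtree_piece_top: "w \<in> V \<Longrightarrow> w \<in> subtree (piece_top w)"
proof (induction w rule: parent_induct)
  case (1 v)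
  show ?case
  proof (cases "v \<in> K")
    case True
    then show ?thesis using piece_top_K subtree_self 1 by simp
  next
    case False
    note not_K = piece_depth_not_K[OF 1(1) False]
    have "par v \<in> subtree (piece_top v)" using 1 not_K by simp
    then have pv: "depth (piece_top v) \<le> depth (par v)"
      "anc (depth (par v) - depth (piece_top v)) (par v) = piece_top v"
      unfolding subtree_def by auto
    have "depth v = Suc (depth (par v))" using depth_par 1 not_K by simp
    then have "depth v - depth (piece_top v) = Suc (depth (par v) - depth (piece_top v))" using pv
      by simp
    then have "anc (depth v - depth (piece_top v)) v = piece_top v" using pv anc_Suc_right by metis
    then show ?thesis unfolding subtree_def using 1 pv \<open>depth v = _\<close> by simp
  qed
qed

lemma piece_top_subtree_cases:
  assumes "w \<in> subtree c"
  shows "piece_top w = piece_top c \<or> piece_top w \<in> subtree c"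
proof -
  have "\<forall>c. w \<in> subtree c \<longrightarrow> piece_top w = piece_top c \<or> piece_top w \<in> subtree c" if "w \<in> V" for w
    using that
  proof (induction w rule: parent_induct)
    case (1 v)
    show ?case
    proof (intro allI impI)
      fix c assume vc: "v \<in> subtree c"
      show "piece_top v = piece_top c \<or> piece_top v \<in> subtree c"
      proof (cases "v = c")
        case False
        note sp = subtree_par[OF vc False]
        show ?thesis
        proof (cases "v \<in> K")
          case True
          then show ?thesis using vc piece_top_K by simp
        next
          case False
          then have "piece_top v = piece_top (par v)" using piece_depth_not_K 1 by blast
          then show ?thesis using 1(2)[OF sp(1)] sp(2) by simp
        qed
      qed simp
    qed
  qed
  then show ?thesis using assms subtree_in_V by blast
qed

definition piece :: "'a \<Rightarrow> 'a set" where "piece t = {w \<in> V. piece_top w = t}"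
definition layer :: "'a \<Rightarrow> nat \<Rightarrow> 'a set" where
  "layer t d = {w \<in> V. piece_top w = t \<and> piece_depth w = d}"

lemma card_layer_le: "card (layer t d) \<le> \<Delta> ^ d"
proof (induction d)
  case 0
  have "layer t 0 \<subseteq> {t}"
    unfolding layer_def piece_top_def by auto
  then have "card (layer t 0) \<le> card {t}" by (intro card_mono) auto
  then show ?case by simp
next
  case (Suc d)
  have "layer t (Suc d) \<subseteq> (\<Union>u\<in>layer t d. children u)"
  proof
    fix w assume w: "w \<in> layer t (Suc d)"
    then have wV: "w \<in> V" "piece_top w = t" "piece_depth w = Suc d" unfolding layer_def by auto
    then have wK: "w \<notin> K" using piece_depth_K by force
    note not_K = piece_depth_not_K[OF wV(1) wK]
    then have "par w \<in> layer t d" using wV unfolding layer_def by simp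
    moreover have "w \<in> children (par w)" using in_children_par wV not_K by blast
    ultimately show "w \<in> (\<Union>u\<in>layer t d. children u)" by blast
  qed
  moreover have "finite (layer t d)" unfolding layer_def using finite_V by simp
  ultimately have "card (layer t (Suc d)) \<le> card (\<Union>u\<in>layer t d. children u)"
    by (intro card_mono) (auto simp: finite_children)
  also have "\<dots> \<le> (\<Sum>u\<in>layer t d. card (children u))"
    using card_UN_le \<open>finite (layer t d)\<close> by blast
  also have "\<dots> \<le> (\<Sum>u\<in>layer t d. \<Delta>)"
    by (rule sum_mono) (use card_children_le layer_def in auto)
  also have "\<dots> = card (layer t d) * \<Delta>" by simp
  also have "\<dots> \<le> \<Delta> ^ d * \<Delta>" using Suc.IH by simp
  finally show ?case by (simp add: mult.commute)
qed

end

locale heavy_cut = bounded_rooted_tree +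
  fixes s :: nat
  assumes s_pos: "s > 0"
begin

sublocale tree_cut V r par depth \<Delta> "heavy s"
  by unfold_locales (auto simp: heavy_subset root_in_heavy)

definition piece_below :: "'a \<Rightarrow> 'a set" where
  "piece_below u = {w \<in> subtree u. piece_top w = piece_top u}"

lemma piece_below_rec:
  assumes u: "u \<in> V"
  shows "piece_below u = insert u (\<Union>c\<in>children u - heavy s. piece_below c)"
proof
  show "piece_below u \<subseteq> insert u (\<Union>c\<in>children u - heavy s. piece_below c)"
  proof
    fix w assume w: "w \<in> piece_below u"
    then have ws: "w \<in> subtree u" "piece_top w = piece_top u" unfolding piece_below_def by auto
    show "w \<in> insert u (\<Union>c\<in>children u - heavy s. piece_below c)"
    proof (cases "w = u")
      case False
      then obtain c where c: "c \<in> children u" "w \<in> subtree c" using ws subtree_rec[OF u] by blast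
      have cV: "c \<in> V" using children_in_V c by simp
      have "c \<notin> heavy s"
      proof
        assume cK: "c \<in> heavy s"
        have "piece_top w = piece_top c \<or> piece_top w \<in> subtree c"
          using piece_top_subtree_cases[OF c(2)] .
        then have "depth c \<le> depth (piece_top w)" using piece_top_K[OF cK] depth_le_subtree by auto
        moreover have "depth (piece_top u) \<le> depth u" using depth_piece_top[OF u] by simp
        ultimately show False using ws(2) depth_children[OF c(1)] by simp
      qed
      moreover have "piece_top c = piece_top u"
        using piece_depth_not_K[OF cV \<open>c \<notin> heavy s\<close>] par_children[OF c(1)] by simp
      ultimately show ?thesis using c ws unfolding piece_below_def by auto
    qed simp
  qed
next
  show "insert u (\<Union>c\<in>children u - heavy s. piece_below c) \<subseteq> piece_below u"
  proof
    fix w assume w: "w \<in> insert u (\<Union>c\<in>children u - heavy s. piece_below c)"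
    show "w \<in> piece_below u"
    proof (cases "w = u")
      case True then show ?thesis using subtree_self u unfolding piece_below_def by simp
    next
      case False
      then obtain c where c: "c \<in> children u" "c \<notin> heavy s" "w \<in> piece_below c" using w by blast
      have cV: "c \<in> V" using children_in_V c by simp
      have "piece_top c = piece_top u" using piece_depth_not_K[OF cV c(2)] par_children[OF c(1)]
        by simp
      moreover have "w \<in> subtree u" using c(3) subtree_rec[OF u] c(1) unfolding piece_below_def
        by auto
      ultimately show ?thesis using c(3) unfolding piece_below_def by simp
    qed
  qed
qed

lemma finite_piece_below: "finite (piece_below u)"
  unfolding piece_below_def using finite_subtree by simp

lemma card_piece_below_le:
  assumes u: "u \<in> V"
  shows "card (piece_below u) \<le> Suc (\<Sum>c\<in>children u - heavy s. card (piece_below c))"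
proof -
  have "card (piece_below u) \<le> Suc (card (\<Union>c\<in>children u - heavy s. piece_below c))"
    unfolding piece_below_rec[OF u]
      by (rule card_insert_le_m1) (simp_all add: finite_piece_below finite_children)
  also have "card (\<Union>c\<in>children u - heavy s. piece_below c) \<le>
      (\<Sum>c\<in>children u - heavy s. card (piece_below c))"
    by (rule card_UN_le) (simp add: finite_children)
  finally show ?thesis by simp
qed

text \<open>Below a vertex that is not heavy, the quotas of the children make up the whole quota, so the
  piece part below it fits into the remainder \<open>card (subtree u) mod s\<close>.\<close>
lemma quota_piece_below_le:
  assumes "u \<in> V" "u \<notin> heavy s"
  shows "s * quota s u + card (piece_below u) \<le> card (subtree u)"
  using assms
proof (induction u rule: children_induct)
  case (1 v)
  let ?H = "children v \<inter> heavy s" and ?L = "children v - heavy s"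
  have "quota s v \<le> (\<Sum>c\<in>children v. quota s c)" using 1 unfolding heavy_def by auto
  then have "s * quota s v + card (piece_below v)
      \<le> s * (\<Sum>c\<in>children v. quota s c) + Suc (\<Sum>c\<in>?L. card (piece_below c))"
    using card_piece_below_le[OF 1(1)] by (metis add_mono mult_le_mono2)
  also have "\<dots> = Suc ((\<Sum>c\<in>?H. s * quota s c) + (\<Sum>c\<in>?L. s * quota s c + card (piece_below c)))"
    by (simp add: sum_distrib_left sum.Int_Diff[OF finite_children] sum.distrib)
  also have "\<dots> \<le> Suc ((\<Sum>c\<in>?H. card (subtree c)) + (\<Sum>c\<in>?L. card (subtree c)))"
  proof -
    have "(\<Sum>c\<in>?H. s * quota s c) \<le> (\<Sum>c\<in>?H. card (subtree c))"
      by (rule sum_mono) (simp add: quota_def mult.commute)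
    moreover have "(\<Sum>c\<in>?L. s * quota s c + card (piece_below c)) \<le> (\<Sum>c\<in>?L. card (subtree c))"
      by (rule sum_mono) (use 1(2) children_in_V in blast)
    ultimately show ?thesis by simp
  qed
  also have "\<dots> = card (subtree v)"
    using card_subtree[OF 1(1)] by (simp add: sum.Int_Diff[OF finite_children, symmetric])
  finally show ?case .
qed

lemma card_piece_below_less:
  assumes u: "u \<in> V" "u \<notin> heavy s"
  shows "card (piece_below u) < s"
proof -
  have "s * quota s u + card (piece_below u) \<le> card (subtree u)" using quota_piece_below_le u .
  moreover have "card (subtree u) = s * quota s u + card (subtree u) mod s" unfolding quota_def
    by simp
  moreover have "card (subtree u) mod s < s" using s_pos by simp
  ultimately show ?thesis by linarith
qed

lemma piece_eq_piece_below: "t \<in> heavy s \<Longrightarrow> piece t = piece_below t"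
  unfolding piece_def piece_below_def using in_subtree_piece_top piece_top_K subtree_in_V by auto

lemma card_piece_le:
  assumes t: "t \<in> heavy s"
  shows "card (piece t) \<le> 1 + \<Delta> * (s - 1)"
proof -
  have tV: "t \<in> V" using t heavy_subset by blast
  have "card (piece t) \<le> Suc (\<Sum>c\<in>children t - heavy s. card (piece_below c))"
    using piece_eq_piece_below[OF t] card_piece_below_le[OF tV] by simp
  also have "(\<Sum>c\<in>children t - heavy s. card (piece_below c)) \<le> (\<Sum>c\<in>children t - heavy s. s - 1)"
    by (rule sum_mono) (use card_piece_below_less children_in_V in \<open>fastforce\<close>)
  also have "\<dots> = card (children t - heavy s) * (s - 1)" by simp
  also have "\<dots> \<le> \<Delta> * (s - 1)"
    using card_children_le[OF tV] card_mono[OF finite_children, of "children t - heavy s" t]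
      by (intro mult_right_mono) auto
  finally show ?thesis by simp
qed

end

section \<open>Walks on the cycle\<close>

definition cycle_adj :: "nat \<Rightarrow> nat \<Rightarrow> nat \<Rightarrow> bool" where
  "cycle_adj l a b \<longleftrightarrow> b = (a + 1) mod l \<or> a = (b + 1) mod l"

definition turn_depth :: "nat \<Rightarrow> nat \<Rightarrow> nat \<Rightarrow> nat" where
  "turn_depth l \<tau> t = (((\<tau> + l - t) mod l) * ((l + 1) div 2)) mod l"

text \<open>Position on the cycle \<open>\<int>/l\<close> at depth \<open>d\<close> of a walk started at \<open>t\<close>: it goes forward up to
  depth \<open>turn_depth l \<tau> t\<close>, then backward, and arrives at phase \<open>\<tau>\<close> at depth \<open>l\<close>, from where it
  goes forward for ever. As \<open>l\<close> is odd, \<open>(l + 1) div 2\<close> inverts \<open>2\<close> modulo \<open>l\<close>, so every phase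
  can be reached.\<close>
definition cycle_walk :: "nat \<Rightarrow> nat \<Rightarrow> nat \<Rightarrow> nat \<Rightarrow> nat" where
  "cycle_walk l \<tau> t d = (if l \<le> d then (\<tau> + d) mod l
     else if d \<le> turn_depth l \<tau> t then (t + d) mod l else (t + 2 * turn_depth l \<tau> t + l - d) mod l)"

lemma cycle_walk_less: "l > 0 \<Longrightarrow> cycle_walk l \<tau> t d < l"
  unfolding cycle_walk_def by auto

lemma cycle_walk_0: "t < l \<Longrightarrow> cycle_walk l \<tau> t 0 = t"
  unfolding cycle_walk_def by auto

lemma cycle_walk_far: "l \<le> d \<Longrightarrow> cycle_walk l \<tau> t d = (\<tau> + d) mod l"
  unfolding cycle_walk_def by auto

lemma turn_depth_less: "l > 0 \<Longrightarrow> turn_depth l \<tau> t < l"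
  unfolding turn_depth_def by auto

lemma turn_depth_reaches:
  assumes l: "odd l" and t: "t < l" and tau: "\<tau> < l"
  shows "(t + 2 * turn_depth l \<tau> t) mod l = \<tau>"
proof -
  define \<delta> where "\<delta> = (\<tau> + l - t) mod l"
  define h where "h = (l + 1) div 2"
  have h2: "2 * h = l + 1" using l unfolding h_def by simp
  have "(2 * turn_depth l \<tau> t) mod l = (2 * (\<delta> * h)) mod l"
    unfolding turn_depth_def \<delta>_def h_def by (simp add: mod_mult_right_eq)
  also have "2 * (\<delta> * h) = \<delta> * l + \<delta>" using h2
    by (metis add.commute distrib_left mult.commute mult.left_commute mult_1_right)
  also have "(\<delta> * l + \<delta>) mod l = \<delta>" unfolding \<delta>_def by simp
  finally have "(2 * turn_depth l \<tau> t) mod l = \<delta>" .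
  then have "(t + 2 * turn_depth l \<tau> t) mod l = (t + \<delta>) mod l" by (metis mod_add_right_eq)
  also have "\<dots> = (t + (\<tau> + l - t)) mod l" unfolding \<delta>_def by (simp add: mod_add_right_eq)
  also have "t + (\<tau> + l - t) = \<tau> + l" using t by simp
  finally show ?thesis using tau by simp
qed

lemma cycle_walk_before_l:
  assumes "odd l" "t < l" "\<tau> < l" "Suc d = l"
  shows "cycle_walk l \<tau> t d = (\<tau> + 1) mod l"
proof -
  define p where "p = turn_depth l \<tau> t"
  have "p < l" and reach: "(t + 2 * p) mod l = \<tau>"
    unfolding p_def using turn_depth_less turn_depth_reaches assms by auto
  show ?thesis
  proof (cases "d \<le> p")
    case True
    then have "p = d" using \<open>p < l\<close> assms(4) by simp
    have "cycle_walk l \<tau> t d = (t + d) mod l" unfolding cycle_walk_def using assms(4) True p_def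
      by simp
    also have "t + d + l = (t + 2 * p) + 1" using \<open>p = d\<close> assms(4) by simp
    then have "(t + d) mod l = ((t + 2 * p) + 1) mod l" by (metis mod_add_self2)
    also have "\<dots> = (\<tau> + 1) mod l" using reach mod_add_left_eq by metis
    finally show ?thesis .
  next
    case False
    have "cycle_walk l \<tau> t d = (t + 2 * p + l - d) mod l"
      unfolding cycle_walk_def using assms(4) False p_def by simp
    also have "t + 2 * p + l - d = t + 2 * p + 1" using assms(4) by simp
    also have "(t + 2 * p + 1) mod l = (\<tau> + 1) mod l" using reach mod_add_left_eq by metis
    finally show ?thesis .
  qed
qed

lemma cycle_walk_step_below_l:
  assumes "Suc d < l"
  shows "cycle_adj l (cycle_walk l \<tau> t d) (cycle_walk l \<tau> t (Suc d))"
proof -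
  define p where "p = turn_depth l \<tau> t"
  consider "Suc d \<le> p" | "d = p" | "p < d" by linarith
  then show ?thesis
  proof cases
    case 1
    then show ?thesis using assms unfolding cycle_adj_def cycle_walk_def p_def[symmetric]
      by (simp add: mod_Suc_eq)
  next
    case 2
    have a: "cycle_walk l \<tau> t d = (t + p) mod l" using 2 assms unfolding cycle_walk_def p_def
      by simp
    have b: "cycle_walk l \<tau> t (Suc d) = (t + p + l - 1) mod l"
      using 2 assms unfolding cycle_walk_def p_def by (simp add: mult_2 add.assoc)
    have "(t + p + l - 1 + 1) mod l = (t + p) mod l" using assms by simp
    then show ?thesis using a b mod_add_left_eq unfolding cycle_adj_def by metis
  next
    case 3
    have a: "cycle_walk l \<tau> t d = (t + 2 * p + l - d) mod l"
      using 3 assms unfolding cycle_walk_def p_def by simp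
    have b: "cycle_walk l \<tau> t (Suc d) = (t + 2 * p + l - Suc d) mod l"
      using 3 assms unfolding cycle_walk_def p_def by simp
    have "t + 2 * p + l - Suc d + 1 = t + 2 * p + l - d" using assms by simp
    then show ?thesis using a b mod_add_left_eq unfolding cycle_adj_def by metis
  qed
qed

lemma cycle_walk_step:
  assumes "odd l" "t < l" "\<tau> < l"
  shows "cycle_adj l (cycle_walk l \<tau> t d) (cycle_walk l \<tau> t (Suc d))"
proof -
  consider "l \<le> d" | "Suc d = l" | "Suc d < l" by linarith
  then show ?thesis
  proof cases
    case 1
    then show ?thesis unfolding cycle_adj_def cycle_walk_def by (simp add: mod_Suc_eq)
  next
    case 2
    then show ?thesis using cycle_walk_before_l[OF assms 2] assms(3)
      unfolding cycle_adj_def cycle_walk_def by simp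
  qed (rule cycle_walk_step_below_l)
qed

lemma cycle_adj_in_cycle_edges:
  assumes "a < l" "b < l" "cycle_adj l a b"
  shows "{a, b} \<in> cycle_edges l"
proof -
  from assms(3) consider "b = Suc a mod l" | "a = Suc b mod l"
    unfolding cycle_adj_def by auto
  then show ?thesis
  proof cases
    case 1
    then show ?thesis using assms(1) unfolding cycle_edges_def by blast
  next
    case 2
    then have "{a, b} = {b, Suc b mod l}" by blast
    then show ?thesis using assms(2) unfolding cycle_edges_def by blast
  qed
qed

lemma cycle_edge_inj:
  assumes "3 \<le> l" "i < l" "j < l" and eq: "{i, Suc i mod l} = {j, Suc j mod l}"
  shows "i = j"
proof (rule ccontr)
  assume "i \<noteq> j"
  then have "i = Suc j mod l" "j = Suc i mod l" using eq by (auto simp: doubleton_eq_iff)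
  then have "(i + 2) mod l = i mod l" using \<open>i < l\<close> by (simp add: mod_Suc_eq)
  then have "l dvd 2" using mod_eq_dvd_iff_nat[of i "i + 2" l] by simp
  then show False using \<open>3 \<le> l\<close> by (auto dest: dvd_imp_le)
qed

lemma Suc_mod_neq: "a < l \<Longrightarrow> 2 \<le> l \<Longrightarrow> Suc a mod l \<noteq> (a::nat)"
  by (cases "Suc a = l") auto

lemma cycle_edges_neq:
  assumes "{a, b} \<in> cycle_edges l" "2 \<le> l"
  shows "a \<noteq> b"
proof
  assume "a = b"
  then obtain i where "i < l" "{a} = {i, Suc i mod l}" using assms(1) unfolding cycle_edges_def
    by auto
  then have "i = a" "Suc i mod l = a" by blast+
  then show False using Suc_mod_neq[of i l] \<open>i < l\<close> assms(2) by simp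
qed

locale cycle_placement = heavy_cut +
  fixes l :: nat and \<tau> :: "'a \<Rightarrow> nat"
  assumes odd_l: "odd l" and l_ge_3: "l \<ge> 3" and tau_less: "\<And>t. \<tau> t < l"
begin

text \<open>\<open>start_pos (depth w) w\<close> is the position of the top of the piece of \<open>w\<close>: the top of a piece
  other than the root's is placed one step after its parent.\<close>
primrec start_pos :: "nat \<Rightarrow> 'a \<Rightarrow> nat" where
  "start_pos 0 w = 0"
| "start_pos (Suc d) w =
     (if w \<in> heavy s
      then (cycle_walk l (\<tau> (piece_top (par w))) (start_pos d (par w)) (piece_depth (par w))
        + 1) mod l
      else start_pos d (par w))"

definition piece_start :: "'a \<Rightarrow> nat" where "piece_start w = start_pos (depth w) w"

definition pos :: "'a \<Rightarrow> nat" where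
  "pos w = cycle_walk l (\<tau> (piece_top w)) (piece_start w) (piece_depth w)"

lemma l_pos: "l > 0" using l_ge_3 by simp

lemma start_pos_less: "start_pos d w < l"
  by (induction d arbitrary: w) (auto simp: l_pos)

lemma piece_start_less: "piece_start w < l" unfolding piece_start_def by (rule start_pos_less)

lemma pos_less: "pos w < l" unfolding pos_def using cycle_walk_less l_pos by simp

lemma piece_start_heavy:
  assumes w: "w \<in> V" "w \<in> heavy s" "w \<noteq> r"
  shows "piece_start w = (pos (par w) + 1) mod l"
proof -
  have "depth w = Suc (depth (par w))" using depth_par w by simp
  then show ?thesis unfolding piece_start_def pos_def using w by simp
qed

lemma piece_start_not_heavy:
  assumes w: "w \<in> V" "w \<notin> heavy s"
  shows "piece_start w = piece_start (par w)"
proof -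
  have "w \<noteq> r" using piece_depth_not_K w by blast
  then have "depth w = Suc (depth (par w))" using depth_par w by simp
  then show ?thesis unfolding piece_start_def using w by simp
qed

lemma pos_heavy: "w \<in> heavy s \<Longrightarrow> pos w = piece_start w"
  unfolding pos_def using piece_depth_K cycle_walk_0 piece_start_less by simp

lemma cycle_adj_pos_par:
  assumes w: "w \<in> V" "w \<noteq> r"
  shows "cycle_adj l (pos (par w)) (pos w)"
proof (cases "w \<in> heavy s")
  case True
  then show ?thesis
    using piece_start_heavy[OF w(1) True w(2)] pos_heavy[OF True] unfolding cycle_adj_def by simp
next
  case False
  note not_K = piece_depth_not_K[OF w(1) False]
  have "pos w =
      cycle_walk l (\<tau> (piece_top (par w))) (piece_start (par w)) (Suc (piece_depth (par w)))"
    unfolding pos_def using not_K piece_start_not_heavy[OF w(1) False] by simp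
  then show ?thesis unfolding pos_def using cycle_walk_step[OF odd_l piece_start_less tau_less]
    by simp
qed

lemma pos_far:
  assumes "l \<le> piece_depth w"
  shows "pos w = (\<tau> (piece_top w) + piece_depth w) mod l"
  unfolding pos_def using cycle_walk_far assms by simp

lemma pos_par_in_cycle_edges:
  assumes "w \<in> V" "w \<noteq> r"
  shows "{pos w, pos (par w)} \<in> cycle_edges l"
  using cycle_adj_in_cycle_edges[OF pos_less pos_less cycle_adj_pos_par[OF assms]]
  by (simp add: insert_commute)

lemma pos_par_far:
  assumes w: "w \<in> V" "l < piece_depth w" and j: "j < l"
  shows "{pos w, pos (par w)} = {j, Suc j mod l} \<longleftrightarrow>
    (\<tau> (piece_top w) + (piece_depth w - 1)) mod l = j"
proof -
  define p where "p = (\<tau> (piece_top w) + (piece_depth w - 1)) mod l"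
  have not_heavy: "w \<notin> heavy s" using w piece_depth_K by fastforce
  note par = piece_depth_not_K[OF w(1) not_heavy]
  have "pos (par w) = p" using pos_far[of "par w"] par w unfolding p_def by simp
  moreover have "pos w = Suc p mod l"
    using pos_far[of w] w unfolding p_def by (simp add: mod_Suc_eq)
  moreover have "p < l" unfolding p_def using l_pos by simp
  ultimately show ?thesis
    using cycle_edge_inj[OF l_ge_3 _ j] unfolding p_def[symmetric] by (auto simp: insert_commute)
qed

end

section \<open>Balancing by rotations\<close>

lemma inj_on_rotate:
  assumes "j < l"
  shows "inj_on (\<lambda>c. (j + l - c) mod l) {..<(l::nat)}"
proof -
  have "c = c'" if "c \<le> c'" "c' < l" "(j + l - c) mod l = (j + l - c') mod l" for c c'
  proof -
    have "l dvd (j + l - c) - (j + l - c')"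
      using that mod_eq_dvd_iff_nat[of "j + l - c'" "j + l - c" l] by simp
    moreover have "(j + l - c) - (j + l - c') = c' - c" using that by simp
    moreover have "c' - c < l" using that by simp
    ultimately have "c' - c = 0" by (metis dvd_imp_le linorder_not_le neq0_conv)
    then show ?thesis using that by simp
  qed
  then show ?thesis unfolding inj_on_def by (metis lessThan_iff linorder_le_cases)
qed

lemma sum_rotate:
  assumes "j < l"
  shows "(\<Sum>c<l. g ((j + l - c) mod l)) = (\<Sum>i<(l::nat). g i)"
proof -
  have inj: "inj_on (\<lambda>c. (j + l - c) mod l) {..<l}" using inj_on_rotate assms .
  have "(\<lambda>c. (j + l - c) mod l) ` {..<l} = {..<l}"
    by (rule endo_inj_surj) (use inj assms in auto)
  then show ?thesis using sum.reindex[OF inj, of g] by simp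
qed

lemma ex_le_of_sum_le:
  fixes f :: "nat \<Rightarrow> real"
  assumes "l > 0" "(\<Sum>c<l. f c) \<le> real l * M"
  shows "\<exists>c<l. f c \<le> M"
proof (rule ccontr)
  assume "\<not> (\<exists>c<l. f c \<le> M)"
  then have "(\<Sum>c<l. M) < (\<Sum>c<l. f c)" using assms(1) by (intro sum_strict_mono) auto
  then show False using assms(2) by simp
qed

text \<open>Averaged over all \<open>l\<close> rotations of \<open>z\<close> the cross terms vanish, so some rotation does at least
  as well as the average.\<close>
lemma exists_rotation_sum_sq_le:
  fixes D z :: "'b::finite \<Rightarrow> nat \<Rightarrow> real"
  assumes l: "l > 0" and z: "\<And>b. (\<Sum>j<l. z b j) = 0"
  shows "\<exists>c<l. (\<Sum>b\<in>UNIV. \<Sum>j<l. (D b j + z b ((j + l - c) mod l))\<^sup>2)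
                 \<le> (\<Sum>b\<in>UNIV. \<Sum>j<l. (D b j)\<^sup>2) + (\<Sum>b\<in>UNIV. \<Sum>j<l. (z b j)\<^sup>2)"
proof -
  define R where "R c b j = z b ((j + l - c) mod l)" for c b j
  define f where "f c = (\<Sum>b\<in>UNIV. \<Sum>j<l. (D b j + R c b j)\<^sup>2)" for c
  define SD where "SD = (\<Sum>b\<in>UNIV. \<Sum>j<l. (D b j)\<^sup>2)"
  define SZ where "SZ = (\<Sum>b\<in>UNIV. \<Sum>j<l. (z b j)\<^sup>2)"
  have f_eq: "f c = SD + 2 * (\<Sum>b\<in>UNIV. \<Sum>j<l. D b j * R c b j) + (\<Sum>b\<in>UNIV. \<Sum>j<l. (R c b j)\<^sup>2)"
    for c
  proof -
    have "(\<Sum>j<l. (D b j + R c b j)\<^sup>2)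
      = (\<Sum>j<l. (D b j)\<^sup>2) + 2 * (\<Sum>j<l. D b j * R c b j) + (\<Sum>j<l. (R c b j)\<^sup>2)" for b
      by (simp only: power2_sum sum.distrib sum_distrib_left mult.assoc)
    then show ?thesis unfolding f_def SD_def by (simp only: sum.distrib sum_distrib_left)
  qed
  have "(\<Sum>c<l. \<Sum>b\<in>UNIV. \<Sum>j<l. D b j * R c b j) = (\<Sum>b\<in>UNIV. \<Sum>c<l. \<Sum>j<l. D b j * R c b j)"
    by (rule sum.swap)
  also have "\<dots> = (\<Sum>b\<in>UNIV. \<Sum>j<l. \<Sum>c<l. D b j * R c b j)"
    by (rule sum.cong[OF refl], rule sum.swap)
  also have "\<dots> = (\<Sum>b\<in>UNIV. \<Sum>j<l. D b j * (\<Sum>c<l. R c b j))"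
    by (simp add: sum_distrib_left)
  also have "\<dots> = 0"
    using sum_rotate[of _ l "z _"] z unfolding R_def by simp
  finally have cross: "(\<Sum>c<l. \<Sum>b\<in>UNIV. \<Sum>j<l. D b j * R c b j) = 0" .
  have "(\<Sum>c<l. \<Sum>b\<in>UNIV. \<Sum>j<l. (R c b j)\<^sup>2) = (\<Sum>b\<in>UNIV. \<Sum>c<l. \<Sum>j<l. (R c b j)\<^sup>2)"
    by (rule sum.swap)
  also have "\<dots> = (\<Sum>b\<in>UNIV. \<Sum>j<l. \<Sum>c<l. (R c b j)\<^sup>2)"
    by (rule sum.cong[OF refl], rule sum.swap)
  also have "\<dots> = (\<Sum>b\<in>UNIV. \<Sum>j<l. \<Sum>i<l. (z b i)\<^sup>2)"
    using sum_rotate[of _ l "\<lambda>i. (z _ i)\<^sup>2"] unfolding R_def by simp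
  also have "\<dots> = real l * SZ" unfolding SZ_def by (simp add: sum_distrib_left)
  finally have "(\<Sum>c<l. f c) = real l * SD + real l * SZ"
    unfolding f_eq sum.distrib using cross by (simp add: sum_distrib_left[symmetric])
  then obtain c where "c < l" "f c \<le> SD + SZ"
    using ex_le_of_sum_le[OF l, of f "SD + SZ"] by (auto simp: algebra_simps)
  then show ?thesis unfolding f_def R_def SD_def SZ_def by blast
qed

lemma exists_rotations_sum_sq_le:
  fixes z :: "'k \<Rightarrow> 'b::finite \<Rightarrow> nat \<Rightarrow> real"
  assumes "finite K" and l: "l > 0" and z: "\<And>t b. t \<in> K \<Longrightarrow> (\<Sum>j<l. z t b j) = 0"
  shows "\<exists>\<tau>. (\<forall>t. \<tau> t < l) \<and>
    (\<Sum>b\<in>UNIV. \<Sum>j<l. (\<Sum>t\<in>K. z t b ((j + l - \<tau> t) mod l))\<^sup>2)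
      \<le> (\<Sum>t\<in>K. \<Sum>b\<in>UNIV. \<Sum>j<l. (z t b j)\<^sup>2)"
  using assms(1) z
proof (induction K rule: finite_induct)
  case empty
  show ?case by (intro exI[of _ "\<lambda>_. 0"]) (simp add: l)
next
  case (insert x F)
  obtain \<tau> where \<tau>: "\<forall>t. \<tau> t < l"
    and IH: "(\<Sum>b\<in>UNIV. \<Sum>j<l. (\<Sum>t\<in>F. z t b ((j + l - \<tau> t) mod l))\<^sup>2)
      \<le> (\<Sum>t\<in>F. \<Sum>b\<in>UNIV. \<Sum>j<l. (z t b j)\<^sup>2)"
    using insert.IH insert.prems by blast
  have zx: "\<And>b. (\<Sum>j<l. z x b j) = 0" using insert.prems by simp
  define D where "D b j = (\<Sum>t\<in>F. z t b ((j + l - \<tau> t) mod l))" for b j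
  from exists_rotation_sum_sq_le[where D = D and z = "z x", OF l zx]
  obtain c where "c < l"
    and c: "(\<Sum>b\<in>UNIV. \<Sum>j<l. (D b j + z x b ((j + l - c) mod l))\<^sup>2)
      \<le> (\<Sum>b\<in>UNIV. \<Sum>j<l. (D b j)\<^sup>2) + (\<Sum>b\<in>UNIV. \<Sum>j<l. (z x b j)\<^sup>2)"
    by (elim exE conjE)
  have split: "(\<Sum>t\<in>insert x F. z t b ((j + l - (\<tau>(x := c)) t) mod l))
      = D b j + z x b ((j + l - c) mod l)" for b j
  proof -
    have "(\<Sum>t\<in>F. z t b ((j + l - (\<tau>(x := c)) t) mod l)) = D b j"
      unfolding D_def using insert.hyps(2) by (intro sum.cong) auto
    then show ?thesis using insert.hyps by (simp add: add.commute)
  qed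
  show ?case
  proof (intro exI[of _ "\<tau>(x := c)"] conjI)
    show "\<forall>t. (\<tau>(x := c)) t < l" using \<tau> \<open>c < l\<close> by simp
    have "(\<Sum>b\<in>UNIV. \<Sum>j<l. (\<Sum>t\<in>insert x F. z t b ((j + l - (\<tau>(x := c)) t) mod l))\<^sup>2)
        \<le> (\<Sum>b\<in>UNIV. \<Sum>j<l. (D b j)\<^sup>2) + (\<Sum>b\<in>UNIV. \<Sum>j<l. (z x b j)\<^sup>2)"
      unfolding split using c .
    also have "\<dots> \<le> (\<Sum>t\<in>insert x F. \<Sum>b\<in>UNIV. \<Sum>j<l. (z t b j)\<^sup>2)"
      using IH insert.hyps unfolding D_def by simp
    finally show "(\<Sum>b\<in>UNIV. \<Sum>j<l. (\<Sum>t\<in>insert x F. z t b ((j + l - (\<tau>(x := c)) t) mod l))\<^sup>2)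
        \<le> (\<Sum>t\<in>insert x F. \<Sum>b\<in>UNIV. \<Sum>j<l. (z t b j)\<^sup>2)" .
  qed
qed

lemma add_mod_eq_iff:
  assumes "(\<tau>::nat) < l" "j < l"
  shows "(\<tau> + d) mod l = j \<longleftrightarrow> d mod l = (j + l - \<tau>) mod l"
proof -
  define e where "e = d mod l"
  have l: "l > 0" using assms by simp
  have el: "e < l" unfolding e_def using l by simp
  have "(\<tau> + d) mod l = (\<tau> + e) mod l" unfolding e_def by (simp add: mod_add_right_eq)
  moreover have "(\<tau> + e) mod l = (if \<tau> + e < l then \<tau> + e else \<tau> + e - l)"
    using el assms by (simp add: mod_if le_mod_geq)
  moreover have "(j + l - \<tau>) mod l = (if j + l - \<tau> < l then j + l - \<tau> else j - \<tau>)"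
    using assms by (auto simp: mod_if le_mod_geq)
  ultimately show ?thesis using el assms unfolding e_def[symmetric] by auto
qed

lemma card_Collect_le_plus_card:
  assumes fin: "finite X" and eq: "\<And>x. x \<in> X \<Longrightarrow> x \<notin> Z \<Longrightarrow> (P x \<longleftrightarrow> Q x)"
  shows "card {x\<in>X. P x} \<le> card {x\<in>X. Q x} + card (X \<inter> Z)"
proof -
  have "{x\<in>X. P x} \<subseteq> {x\<in>X. Q x} \<union> (X \<inter> Z)" using eq by auto
  then have "card {x\<in>X. P x} \<le> card ({x\<in>X. Q x} \<union> (X \<inter> Z))" by (intro card_mono) (use fin in auto)
  also have "\<dots> \<le> card {x\<in>X. Q x} + card (X \<inter> Z)" by (rule card_Un_le)
  finally show ?thesis .
qed

lemma abs_card_Collect_diff_le: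
  assumes fin: "finite X" and eq: "\<And>x. x \<in> X \<Longrightarrow> x \<notin> Z \<Longrightarrow> (P x \<longleftrightarrow> Q x)"
  shows "\<bar>real (card {x\<in>X. P x}) - real (card {x\<in>X. Q x})\<bar> \<le> real (card (X \<inter> Z))"
proof -
  have 1: "card {x\<in>X. P x} \<le> card {x\<in>X. Q x} + card (X \<inter> Z)"
    by (rule card_Collect_le_plus_card[OF fin eq])
  have 2: "card {x\<in>X. Q x} \<le> card {x\<in>X. P x} + card (X \<inter> Z)"
    by (rule card_Collect_le_plus_card[OF fin]) (use eq in blast)
  show ?thesis using 1 2 by linarith
qed

lemma card_eq_sum_card_fibres:
  assumes "finite S" "finite T" "g ` S \<subseteq> T"
  shows "card S = (\<Sum>t\<in>T. card {x\<in>S. g x = t})"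
proof -
  have "(\<Sum>t\<in>T. \<Sum>x\<in>{x. x \<in> S \<and> g x = t}. (1::nat)) = (\<Sum>x\<in>S. 1)"
    by (rule sum.group[OF assms])
  then show ?thesis by simp
qed

lemma sq_le_sum_sq:
  fixes F :: "'b::finite \<Rightarrow> nat \<Rightarrow> real"
  assumes "j < l"
  shows "(F b j)\<^sup>2 \<le> (\<Sum>b\<in>UNIV. \<Sum>j<l. (F b j)\<^sup>2)"
proof -
  have "(F b j)\<^sup>2 \<le> (\<Sum>j<l. (F b j)\<^sup>2)"
    by (rule member_le_sum[of j "{..<l}" "\<lambda>j. (F b j)\<^sup>2"]) (use assms in auto)
  also have "\<dots> \<le> (\<Sum>b\<in>UNIV. \<Sum>j<l. (F b j)\<^sup>2)"
    by (rule member_le_sum[of b UNIV "\<lambda>b. \<Sum>j<l. (F b j)\<^sup>2"]) (auto intro: sum_nonneg)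
  finally show ?thesis .
qed

context tree_cut
begin

text \<open>The profiles of the piece below \<open>t\<close> count its vertices, resp. the edges to their parents,
  by piece depth modulo \<open>l\<close>; the edge of \<open>v\<close> is counted at the depth of \<open>par v\<close>.\<close>
definition vertex_profile :: "nat \<Rightarrow> 'a \<Rightarrow> nat \<Rightarrow> nat" where
  "vertex_profile l t j = card {v\<in>V. piece_top v = t \<and> piece_depth v mod l = j}"
definition edge_profile :: "nat \<Rightarrow> 'a \<Rightarrow> nat \<Rightarrow> nat" where
  "edge_profile l t j =
      card {v\<in>V. piece_top v = t \<and> 0 < piece_depth v \<and> (piece_depth v - 1) mod l = j}"
definition profile :: "nat \<Rightarrow> 'a \<Rightarrow> bool \<Rightarrow> nat \<Rightarrow> real" where
  "profile l t b j = real (if b then edge_profile l t j else vertex_profile l t j)"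
definition centred_profile :: "nat \<Rightarrow> 'a \<Rightarrow> bool \<Rightarrow> nat \<Rightarrow> real" where
  "centred_profile l t b j = profile l t b j - (\<Sum>i<l. profile l t b i) / real l"

lemma sum_centred_profile: "l > 0 \<Longrightarrow> (\<Sum>j<l. centred_profile l t b j) = 0"
  unfolding centred_profile_def by (simp add: sum_subtractf)

lemma sum_vertex_profile: "l > 0 \<Longrightarrow> (\<Sum>i<l. vertex_profile l t i) = card (piece t)"
proof -
  assume l: "l > 0"
  have "card {v\<in>V. piece_top v = t} =
      (\<Sum>i<l. card {x\<in>{v\<in>V. piece_top v = t}. piece_depth x mod l = i})"
    by (rule card_eq_sum_card_fibres) (use finite_V l in auto)
  also have "\<dots> = (\<Sum>i<l. vertex_profile l t i)" unfolding vertex_profile_def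
    by (intro sum.cong refl arg_cong[where f=card]) auto
  finally show ?thesis unfolding piece_def by simp
qed

lemma sum_edge_profile: "l > 0 \<Longrightarrow> (\<Sum>i<l. edge_profile l t i) =
    card {v\<in>V. piece_top v = t \<and> 0 < piece_depth v}"
proof -
  assume l: "l > 0"
  have "card {v\<in>V. piece_top v = t \<and> 0 < piece_depth v} =
      (\<Sum>i<l. card {x\<in>{v\<in>V. piece_top v = t \<and> 0 < piece_depth v}. (piece_depth x - 1) mod l = i})"
    by (rule card_eq_sum_card_fibres) (use finite_V l in auto)
  also have "\<dots> = (\<Sum>i<l. edge_profile l t i)" unfolding edge_profile_def
    by (intro sum.cong refl arg_cong[where f=card]) auto
  finally show ?thesis by simp
qed

lemma piece_depth_eq_0_iff: "v \<in> V \<Longrightarrow> piece_depth v = 0 \<longleftrightarrow> v \<in> K"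
  using piece_depth_K piece_top_in_K unfolding piece_top_def by force

lemma sum_pieces_card: "(\<Sum>t\<in>K. card {v\<in>V. piece_top v = t \<and> R v}) = card {v\<in>V. R v}"
proof -
  have "card {v\<in>V. R v} = (\<Sum>t\<in>K. card {x\<in>{v\<in>V. R v}. piece_top x = t})"
    by (rule card_eq_sum_card_fibres) (use finite_V K_subset piece_top_in_K finite_subset in auto)
  also have "\<dots> = (\<Sum>t\<in>K. card {v\<in>V. piece_top v = t \<and> R v})"
    by (intro sum.cong refl arg_cong[where f=card]) auto
  finally show ?thesis by simp
qed

lemma profile_le: "profile l t b j \<le> real (card (piece t))"
proof -
  have "vertex_profile l t j \<le> card (piece t)" unfolding vertex_profile_def piece_def
    by (rule card_mono) (use finite_V in auto)
  moreover have "edge_profile l t j \<le> card (piece t)" unfolding edge_profile_def piece_def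
    by (rule card_mono) (use finite_V in auto)
  ultimately show ?thesis unfolding profile_def by auto
qed

lemma abs_centred_profile_le:
  assumes l: "l > 0"
  shows "\<bar>centred_profile l t b j\<bar> \<le> real (card (piece t))"
proof -
  define P where "P = real (card (piece t))"
  have m: "(\<Sum>i<l. profile l t b i) \<le> P"
  proof (cases b)
    case True
    then have "(\<Sum>i<l. profile l t b i) = real (card {v\<in>V. piece_top v = t \<and> 0 < piece_depth v})"
      unfolding profile_def using sum_edge_profile[OF l] by (simp flip: of_nat_sum)
    also have "\<dots> \<le> P" unfolding P_def piece_def by (simp, rule card_mono) (use finite_V in auto)
    finally show ?thesis .
  next
    case False
    then show ?thesis unfolding profile_def P_def using sum_vertex_profile[OF l]
      by (simp flip: of_nat_sum)
  qed
  have m0: "0 \<le> (\<Sum>i<l. profile l t b i)" unfolding profile_def by (simp add: sum_nonneg)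
  have "(\<Sum>i<l. profile l t b i) / real l \<le> (\<Sum>i<l. profile l t b i) / 1"
    by (rule frac_le) (use m0 l in auto)
  then have "(\<Sum>i<l. profile l t b i) / real l \<le> P" using m by simp
  moreover have "0 \<le> (\<Sum>i<l. profile l t b i) / real l" using m0 by simp
  moreover have "0 \<le> profile l t b j" "profile l t b j \<le> P" unfolding P_def using profile_le
    by (auto simp: profile_def)
  ultimately show ?thesis unfolding centred_profile_def P_def by linarith
qed

end

context cycle_placement
begin

definition vertex_count :: "nat \<Rightarrow> nat" where "vertex_count j = card {v\<in>V. pos v = j}"
definition edge_count :: "nat \<Rightarrow> nat" where
  "edge_count j = card {w\<in>V. w \<noteq> r \<and> {pos w, pos (par w)} = {j, Suc j mod l}}"
text \<open>Outside \<open>near\<close> every vertex \<open>v\<close> sits at \<open>(\<tau> (piece_top v) + piece_depth v) mod l\<close>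
  (\<open>pos_far\<close>); the \<open>far_\<close> counts pretend this held everywhere.\<close>
definition near :: "'a set" where "near = {v\<in>V. piece_depth v \<le> l}"

definition far_vertex_count :: "nat \<Rightarrow> nat" where
  "far_vertex_count j = card {v\<in>V. (\<tau> (piece_top v) + piece_depth v) mod l = j}"

definition far_edge_count :: "nat \<Rightarrow> nat" where
  "far_edge_count j =
      card {v\<in>V. 0 < piece_depth v \<and> (\<tau> (piece_top v) + (piece_depth v - 1)) mod l = j}"

lemma vertex_count_near_far:
  "\<bar>real (vertex_count j) - real (far_vertex_count j)\<bar> \<le> real (card near)"
proof -
  have "\<bar>real (vertex_count j) - real (far_vertex_count j)\<bar> \<le> real (card (V \<inter> near))"
    unfolding vertex_count_def far_vertex_count_def
    by (rule abs_card_Collect_diff_le[OF finite_V]) (auto simp: near_def pos_far)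
  also have "V \<inter> near = near" unfolding near_def by auto
  finally show ?thesis .
qed

lemma edge_count_near_far:
  assumes "j < l"
  shows "\<bar>real (edge_count j) - real (far_edge_count j)\<bar> \<le> real (card near)"
proof -
  have pr: "piece_depth r = 0" using piece_depth_K root_in_K by simp
  have "\<bar>real (edge_count j) - real (far_edge_count j)\<bar> \<le> real (card (V \<inter> near))"
    unfolding edge_count_def far_edge_count_def
  proof (rule abs_card_Collect_diff_le[OF finite_V])
    fix x assume x: "x \<in> V" "x \<notin> near"
    then have "l < piece_depth x" unfolding near_def by auto
    then show "(x \<noteq> r \<and> {pos x, pos (par x)} = {j, Suc j mod l}) \<longleftrightarrow>
        (0 < piece_depth x \<and> (\<tau> (piece_top x) + (piece_depth x - 1)) mod l = j)"
      using pos_par_far[OF x(1) _ assms] pr by auto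
  qed
  also have "V \<inter> near = near" unfolding near_def by auto
  finally show ?thesis .
qed

lemma far_vertex_count_eq:
  assumes j: "j < l"
  shows "real (far_vertex_count j) = (\<Sum>t\<in>heavy s. profile l t False ((j + l - \<tau> t) mod l))"
proof -
  have "far_vertex_count j
      = (\<Sum>t\<in>heavy s. card {v\<in>V. piece_top v = t \<and> (\<tau> (piece_top v) + piece_depth v) mod l = j})"
    using sum_pieces_card[of "\<lambda>v. (\<tau> (piece_top v) + piece_depth v) mod l = j"]
    unfolding far_vertex_count_def by simp
  also have "\<dots> = (\<Sum>t\<in>heavy s. vertex_profile l t ((j + l - \<tau> t) mod l))"
    unfolding vertex_profile_def
    by (intro sum.cong refl arg_cong[where f=card] Collect_cong)
      (use add_mod_eq_iff[OF tau_less j] in auto)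
  finally show ?thesis unfolding profile_def by simp
qed

lemma far_edge_count_eq:
  assumes j: "j < l"
  shows "real (far_edge_count j) = (\<Sum>t\<in>heavy s. profile l t True ((j + l - \<tau> t) mod l))"
proof -
  have "far_edge_count j = (\<Sum>t\<in>heavy s. card {v\<in>V. piece_top v = t \<and>
      (0 < piece_depth v \<and> (\<tau> (piece_top v) + (piece_depth v - 1)) mod l = j)})"
    using sum_pieces_card[of
        "\<lambda>v. 0 < piece_depth v \<and> (\<tau> (piece_top v) + (piece_depth v - 1)) mod l = j"]
    unfolding far_edge_count_def by simp
  also have "\<dots> = (\<Sum>t\<in>heavy s. edge_profile l t ((j + l - \<tau> t) mod l))"
    unfolding edge_profile_def
    by (intro sum.cong refl arg_cong[where f=card] Collect_cong)
      (use add_mod_eq_iff[OF tau_less j] in auto)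
  finally show ?thesis unfolding profile_def by simp
qed

lemma sum_sum_vertex_profiles: "(\<Sum>t\<in>heavy s. (\<Sum>i<l. profile l t False i)) = real (card V)"
proof -
  have "(\<Sum>t\<in>heavy s. (\<Sum>i<l. profile l t False i))
      = real (\<Sum>t\<in>heavy s. card {v\<in>V. piece_top v = t \<and> True})"
    unfolding profile_def using sum_vertex_profile[OF l_pos] unfolding piece_def
    by (simp flip: of_nat_sum)
  also have "\<dots> = real (card V)" using sum_pieces_card[of "\<lambda>_. True"] by simp
  finally show ?thesis .
qed

lemma sum_sum_edge_profiles:
  "(\<Sum>t\<in>heavy s. (\<Sum>i<l. profile l t True i)) = real (card V) - real (card (heavy s))"
proof -
  have "(\<Sum>t\<in>heavy s. (\<Sum>i<l. profile l t True i))
      = real (\<Sum>t\<in>heavy s. card {v\<in>V. piece_top v = t \<and> 0 < piece_depth v})"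
    unfolding profile_def using sum_edge_profile[OF l_pos] by (simp flip: of_nat_sum)
  also have "\<dots> = real (card {v\<in>V. 0 < piece_depth v})"
    using sum_pieces_card[of "\<lambda>v. 0 < piece_depth v"] by simp
  also have "{v\<in>V. 0 < piece_depth v} = V - heavy s" using piece_depth_eq_0_iff by fastforce
  also have "real (card (V - heavy s)) = real (card V) - real (card (heavy s))"
    using card_Diff_subset[OF finite_subset[OF heavy_subset finite_V] heavy_subset]
      card_mono[OF finite_V heavy_subset] by simp
  finally show ?thesis .
qed

lemma card_near_le: "card near \<le> card (heavy s) * (\<Sum>d\<le>l. \<Delta> ^ d)"
proof -
  have "near \<subseteq> (\<Union>t\<in>heavy s. \<Union>d\<in>{..l}. layer t d)"
    unfolding near_def layer_def using piece_top_in_K by auto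
  then have "card near \<le> card (\<Union>t\<in>heavy s. \<Union>d\<in>{..l}. layer t d)"
    by (intro card_mono)
      (auto intro!: finite_UN_I finite_subset[OF heavy_subset finite_V] simp: layer_def finite_V)
  also have "\<dots> \<le> (\<Sum>t\<in>heavy s. card (\<Union>d\<in>{..l}. layer t d))"
    by (rule card_UN_le) (rule finite_subset[OF heavy_subset finite_V])
  also have "\<dots> \<le> (\<Sum>t\<in>heavy s. \<Sum>d\<le>l. \<Delta> ^ d)"
  proof (rule sum_mono)
    fix t
    have "card (\<Union>d\<in>{..l}. layer t d) \<le> (\<Sum>d\<le>l. card (layer t d))" by (rule card_UN_le) simp
    also have "\<dots> \<le> (\<Sum>d\<le>l. \<Delta> ^ d)" by (rule sum_mono) (rule card_layer_le)
    finally show "card (\<Union>d\<in>{..l}. layer t d) \<le> (\<Sum>d\<le>l. \<Delta> ^ d)" .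
  qed
  also have "\<dots> = card (heavy s) * (\<Sum>d\<le>l. \<Delta> ^ d)" by simp
  finally show ?thesis .
qed

lemma sum_sq_centred_profiles_le:
  "(\<Sum>t\<in>heavy s. \<Sum>b\<in>UNIV. \<Sum>j<l. (centred_profile l t b j)\<^sup>2)
    \<le> 2 * real l * (1 + real \<Delta> * (real s - 1)) * real (card V)"
proof -
  define c where "c = 1 + real \<Delta> * (real s - 1)"
  have Pc: "real (card (piece t)) \<le> c" if "t \<in> heavy s" for t
  proof -
    have "card (piece t) \<le> 1 + \<Delta> * (s - 1)" using card_piece_le that by blast
    moreover have "real (1 + \<Delta> * (s - 1)) = c" unfolding c_def using s_pos
      by (simp add: of_nat_diff)
    ultimately show ?thesis by (metis of_nat_le_iff)
  qed
  have "(\<Sum>t\<in>heavy s. \<Sum>b\<in>UNIV. \<Sum>j<l. (centred_profile l t b j)\<^sup>2) \<le>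
      (\<Sum>t\<in>heavy s. \<Sum>b\<in>(UNIV::bool set). \<Sum>j<l. (real (card (piece t)))\<^sup>2)"
  proof (intro sum_mono)
    fix t b j
    have "\<bar>centred_profile l t b j\<bar> \<le> real (card (piece t))"
      by (rule abs_centred_profile_le[OF l_pos])
    then show "(centred_profile l t b j)\<^sup>2 \<le> (real (card (piece t)))\<^sup>2"
      by (metis abs_ge_zero power2_abs power_mono)
  qed
  also have "\<dots> = (\<Sum>t\<in>heavy s. 2 * real l * (real (card (piece t)) * real (card (piece t))))"
    by (simp add: power2_eq_square mult.assoc)
  also have "\<dots> \<le> (\<Sum>t\<in>heavy s. 2 * real l * (c * real (card (piece t))))"
    by (intro sum_mono mult_left_mono mult_right_mono Pc) auto
  also have "\<dots> = 2 * real l * c * real (\<Sum>t\<in>heavy s. card (piece t))"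
    by (simp add: sum_distrib_left mult.assoc)
  also have "(\<Sum>t\<in>heavy s. card (piece t)) = card V"
    using sum_pieces_card[of "\<lambda>_. True"] unfolding piece_def by simp
  finally show ?thesis unfolding c_def by simp
qed

lemma count_deviation:
  assumes G: "(\<Sum>b\<in>UNIV. \<Sum>j<l. (\<Sum>t\<in>heavy s. centred_profile l t b ((j + l - \<tau> t) mod l))\<^sup>2)
      \<le> (\<Sum>t\<in>heavy s. \<Sum>b\<in>UNIV. \<Sum>j<l. (centred_profile l t b j)\<^sup>2)"
    and j: "j < l"
  shows "\<bar>real (vertex_count j) - real (card V) / real l\<bar>
           \<le> real (card (heavy s) * (\<Sum>d\<le>l. \<Delta> ^ d)) +
             sqrt (2 * real l * (1 + real \<Delta> * (real s - 1)) * real (card V))"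
    and "\<bar>real (edge_count j) - real (card V) / real l\<bar>
           \<le> real (card (heavy s) * (\<Sum>d\<le>l. \<Delta> ^ d)) +
             sqrt (2 * real l * (1 + real \<Delta> * (real s - 1)) * real (card V))
             + real (card (heavy s)) / real l"
proof -
  define S where "S b j = (\<Sum>t\<in>heavy s. centred_profile l t b ((j + l - \<tau> t) mod l))" for b j
  define M where "M = sqrt (2 * real l * (1 + real \<Delta> * (real s - 1)) * real (card V))"
  have Sb: "\<bar>S b j\<bar> \<le> M" for b
  proof -
    have "(S b j)\<^sup>2 \<le> (\<Sum>b\<in>UNIV. \<Sum>j<l. (S b j)\<^sup>2)" by (rule sq_le_sum_sq[OF j])
    also have "\<dots> \<le> 2 * real l * (1 + real \<Delta> * (real s - 1)) * real (card V)"
      using G sum_sq_centred_profiles_le unfolding S_def by linarith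
    finally have "sqrt ((S b j)\<^sup>2) \<le> M" unfolding M_def by (rule real_sqrt_le_mono)
    then show ?thesis by simp
  qed
  have SA: "S False j = real (far_vertex_count j) - real (card V) / real l"
  proof -
    have "S False j = (\<Sum>t\<in>heavy s. profile l t False ((j + l - \<tau> t) mod l)) -
        (\<Sum>t\<in>heavy s. (\<Sum>i<l. profile l t False i)) / real l"
      unfolding S_def centred_profile_def by (simp add: sum_subtractf sum_divide_distrib)
    then show ?thesis using far_vertex_count_eq[OF j] sum_sum_vertex_profiles by simp
  qed
  have SB: "S True j = real (far_edge_count j)
             - (real (card V) - real (card (heavy s))) / real l"
  proof -
    have "S True j = (\<Sum>t\<in>heavy s. profile l t True ((j + l - \<tau> t) mod l)) -
        (\<Sum>t\<in>heavy s. (\<Sum>i<l. profile l t True i)) / real l"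
      unfolding S_def centred_profile_def by (simp add: sum_subtractf sum_divide_distrib)
    then show ?thesis using far_edge_count_eq[OF j] sum_sum_edge_profiles by simp
  qed
  have Z: "real (card near) \<le> real (card (heavy s) * (\<Sum>d\<le>l. \<Delta> ^ d))"
    using card_near_le by (simp only: of_nat_le_iff)
  show "\<bar>real (vertex_count j) - real (card V) / real l\<bar>
           \<le> real (card (heavy s) * (\<Sum>d\<le>l. \<Delta> ^ d)) +
             sqrt (2 * real l * (1 + real \<Delta> * (real s - 1)) * real (card V))"
    using vertex_count_near_far[of j] SA Sb[of False] Z unfolding M_def by linarith
  have "(real (card V) - real (card (heavy s))) / real l = real (card V) / real l -
      real (card (heavy s)) / real l"
    by (simp add: diff_divide_distrib)
  moreover have "0 \<le> real (card (heavy s)) / real l" by simp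
  ultimately show "\<bar>real (edge_count j) - real (card V) / real l\<bar>
           \<le> real (card (heavy s) * (\<Sum>d\<le>l. \<Delta> ^ d)) +
             sqrt (2 * real l * (1 + real \<Delta> * (real s - 1)) * real (card V))
             + real (card (heavy s)) / real l"
    using edge_count_near_far[OF j] SB Sb[of True] Z unfolding M_def by linarith
qed

end

lemma (in heavy_cut) card_heavy_le_sqrt:
  assumes "sqrt (card V) \<le> s"
  shows "real (card (heavy s)) \<le> 2 * sqrt (card V)"
proof -
  have u: "sqrt (card V) \<ge> 1" using card_V_pos by simp
  have "card (heavy s) = Suc (card (heavy s - {r}))"
    using card_Suc_Diff1[OF finite_subset[OF heavy_subset finite_V] root_in_heavy] by simp
  also have "\<dots> \<le> Suc (card V div s)" using card_heavy_le[OF s_pos] by simp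
  finally have "real (card (heavy s)) \<le> 1 + real (card V div s)" by simp
  also have "real (card V div s) \<le> real (card V) / real s" by (rule of_nat_div_le_of_nat)
  also have "real (card V) / real s \<le> real (card V) / sqrt (card V)"
    using assms u s_pos by (intro divide_left_mono) auto
  also have "real (card V) / sqrt (card V) = sqrt (card V)"
    by (simp add: real_div_sqrt)
  finally show ?thesis using u by linarith
qed

definition placement_error :: "nat \<Rightarrow> nat \<Rightarrow> real" where
  "placement_error \<Delta> l = 2 * (real (\<Sum>d\<le>l. \<Delta> ^ d) + 1) + sqrt (2 * real l * (1 + real \<Delta>))"

lemma sqrt_mult_sqrt_sqrt: "0 \<le> x \<Longrightarrow> sqrt x * sqrt (sqrt x) = (x::real) powr (3/4)"
  by (simp add: powr_half_sqrt[symmetric] powr_powr powr_add[symmetric])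

context cycle_placement
begin

lemma count_deviation_le_powr:
  assumes G: "(\<Sum>b\<in>UNIV. \<Sum>j<l. (\<Sum>t\<in>heavy s. centred_profile l t b ((j + l - \<tau> t) mod l))\<^sup>2)
      \<le> (\<Sum>t\<in>heavy s. \<Sum>b\<in>UNIV. \<Sum>j<l. (centred_profile l t b j)\<^sup>2)"
    and j: "j < l" and s: "sqrt (card V) \<le> s" "s \<le> sqrt (card V) + 1"
  shows "\<bar>real (vertex_count j) - real (card V) / real l\<bar>
      \<le> placement_error \<Delta> l * real (card V) powr (3/4)"
    and "\<bar>real (edge_count j) - real (card V) / real l\<bar>
      \<le> placement_error \<Delta> l * real (card V) powr (3/4)"
proof -
  define u where "u = sqrt (card V)"
  define Z where "Z = (\<Sum>d\<le>l. \<Delta> ^ d)"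
  have u: "u \<ge> 1" unfolding u_def using card_V_pos by simp
  have powr: "real (card V) powr (3/4) = u * sqrt u" unfolding u_def
    by (simp add: sqrt_mult_sqrt_sqrt)
  have heavy: "real (card (heavy s)) \<le> 2 * u" using card_heavy_le_sqrt s(1) unfolding u_def .
  have uu: "u * u = real (card V)" unfolding u_def by simp
  have "1 + real \<Delta> * (real s - 1) \<le> 1 + real \<Delta> * u"
    using s(2) unfolding u_def[symmetric] by (simp add: mult_left_mono)
  also have "\<dots> \<le> (1 + real \<Delta>) * u" using u by (simp add: algebra_simps)
  finally have "2 * real l * (1 + real \<Delta> * (real s - 1)) * real (card V)
      \<le> 2 * real l * ((1 + real \<Delta>) * u) * real (card V)"
    by (intro mult_right_mono mult_left_mono) auto
  also have "\<dots> = (2 * real l * (1 + real \<Delta>)) * (u * (u * u))" using uu by (simp add: algebra_simps)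
  finally have "sqrt (2 * real l * (1 + real \<Delta> * (real s - 1)) * real (card V))
      \<le> sqrt ((2 * real l * (1 + real \<Delta>)) * (u * (u * u)))"
    by (rule real_sqrt_le_mono)
  also have "\<dots> = sqrt (2 * real l * (1 + real \<Delta>)) * (u * sqrt u)"
    using u by (simp add: real_sqrt_mult)
  finally have profile_part: "sqrt (2 * real l * (1 + real \<Delta> * (real s - 1)) * real (card V))
      \<le> sqrt (2 * real l * (1 + real \<Delta>)) * (u * sqrt u)" .
  have "real (card (heavy s)) / real l \<le> real (card (heavy s)) / 1"
    by (rule frac_le) (use l_pos in auto)
  then have "real (card (heavy s) * Z) + real (card (heavy s)) / real l \<le>
      real (card (heavy s)) * (real Z + 1)"
    by (simp add: algebra_simps)
  also have "\<dots> \<le> 2 * u * (real Z + 1)" using heavy by (intro mult_right_mono) auto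
  also have "\<dots> \<le> 2 * u * (real Z + 1) * sqrt u" using u by simp
  finally have near_part: "real (card (heavy s) * Z) + real (card (heavy s)) / real l
      \<le> 2 * (real Z + 1) * (u * sqrt u)" by (simp add: algebra_simps)
  have "placement_error \<Delta> l * real (card V) powr (3/4)
      = 2 * (real Z + 1) * (u * sqrt u) + sqrt (2 * real l * (1 + real \<Delta>)) * (u * sqrt u)"
    unfolding placement_error_def powr Z_def by (simp add: algebra_simps)
  moreover have "0 \<le> real (card (heavy s)) / real l" by simp
  ultimately show "\<bar>real (vertex_count j) - real (card V) / real l\<bar>
      \<le> placement_error \<Delta> l * real (card V) powr (3/4)"
    and "\<bar>real (edge_count j) - real (card V) / real l\<bar>
      \<le> placement_error \<Delta> l * real (card V) powr (3/4)"
    using count_deviation[OF G j, folded Z_def] profile_part near_part by linarith+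
qed

end

lemma (in bounded_rooted_tree) exists_balanced_cycle_placement:
  assumes "odd l" "3 \<le> l"
  shows "\<exists>pos. (\<forall>v\<in>V. pos v < l) \<and> (\<forall>w\<in>V - {r}. {pos w, pos (par w)} \<in> cycle_edges l) \<and>
    (\<forall>j<l.
      \<bar>real (card {v\<in>V. pos v = j}) - real (card V) / real l\<bar>
        \<le> placement_error \<Delta> l * real (card V) powr (3/4) \<and>
      \<bar>real (card {w\<in>V. w \<noteq> r \<and> {pos w, pos (par w)} = {j, Suc j mod l}}) - real (card V) / real l\<bar>
        \<le> placement_error \<Delta> l * real (card V) powr (3/4))"
proof -
  define s where "s = nat \<lceil>sqrt (card V)\<rceil>"
  have "sqrt (card V) \<ge> 1" using card_V_pos by simp
  then have s: "sqrt (card V) \<le> s" "s \<le> sqrt (card V) + 1" and "s > 0" unfolding s_def by linarith+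
  interpret heavy_cut V r par depth \<Delta> s by unfold_locales (rule \<open>s > 0\<close>)
  obtain \<tau> where \<tau>: "\<forall>t. \<tau> t < l"
    and G: "(\<Sum>b\<in>UNIV. \<Sum>j<l. (\<Sum>t\<in>heavy s. centred_profile l t b ((j + l - \<tau> t) mod l))\<^sup>2)
      \<le> (\<Sum>t\<in>heavy s. \<Sum>b\<in>UNIV. \<Sum>j<l. (centred_profile l t b j)\<^sup>2)"
    using exists_rotations_sum_sq_le[OF finite_subset[OF heavy_subset[of s] finite_V],
        where l = l and z = "centred_profile l"] sum_centred_profile[of l] assms(2) by auto
  interpret cycle_placement V r par depth \<Delta> s l \<tau>
    by unfold_locales (use assms \<tau> in auto)
  show ?thesis
    using pos_less pos_par_in_cycle_edges count_deviation_le_powr[OF G _ s]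
    unfolding vertex_count_def edge_count_def by (intro exI[of _ pos]) blast
qed

lemma tree_balanced_homomorphism_to_loose_cycle:
  assumes T: "is_tree V E" and deg: "max_degree V E \<le> \<Delta>" and l: "odd l" "3 \<le> l"
  shows "\<exists>h. is_homomorphism h (exp_verts k V E) (exp_edges k E)
      (loose_cycle_verts k l) (loose_cycle_edges k l) \<and>
    (\<forall>x\<in>loose_cycle_verts k l. \<bar>real (card {y\<in>exp_verts k V E. h y = x}) - real (card V) / real l\<bar>
        \<le> placement_error \<Delta> l * real (card V) powr (3/4))"
proof -
  obtain r par and depth :: "'a \<Rightarrow> nat" where
    rooted: "r \<in> V" "depth r = 0" "\<forall>v\<in>V - {r}. par v \<in> V \<and> depth v = Suc (depth (par v))"
    and E: "E = (\<lambda>v. {v, par v}) ` (V - {r})"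
    using is_tree_rooted[OF T] by (elim exE conjE) (rule that; assumption)
  have "finite V" using T unfolding is_tree_def is_graph_def by simp
  interpret rooted_tree V r par depth by unfold_locales (use rooted \<open>finite V\<close> in auto)
  interpret bounded_rooted_tree V r par depth \<Delta>
    by unfold_locales (use card_children_le_max_degree deg E in fastforce)
  obtain pos where verts: "\<forall>v\<in>V. pos v < l"
    and edges: "\<forall>w\<in>V - {r}. {pos w, pos (par w)} \<in> cycle_edges l"
    and balanced: "\<forall>j<l.
      \<bar>real (card {v\<in>V. pos v = j}) - real (card V) / real l\<bar>
        \<le> placement_error \<Delta> l * real (card V) powr (3/4) \<and>
      \<bar>real (card {w\<in>V. w \<noteq> r \<and> {pos w, pos (par w)} = {j, Suc j mod l}}) - real (card V) / real l\<bar>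
        \<le> placement_error \<Delta> l * real (card V) powr (3/4)"
    using exists_balanced_cycle_placement[OF l] by blast
  have "inj_on pos {w, par w} \<and> pos ` {w, par w} \<in> cycle_edges l" if "w \<in> V - {r}" for w
    using edges that cycle_edges_neq[of "pos w" "pos (par w)" l] l(2) by auto
  then have hom: "is_homomorphism (exp_map pos) (exp_verts k V E) (exp_edges k E)
      (loose_cycle_verts k l) (loose_cycle_edges k l)"
    unfolding loose_cycle_verts_def loose_cycle_edges_def
    by (intro exp_map_homomorphism) (use verts E in \<open>auto simp: cycle_verts_def\<close>)
  have "\<bar>real (card {y\<in>exp_verts k V E. exp_map pos y = x}) - real (card V) / real l\<bar>
      \<le> placement_error \<Delta> l * real (card V) powr (3/4)" if "x \<in> loose_cycle_verts k l" for x
  proof -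
    from that consider (vertex) j where "j < l" "x = Inl j"
      | (edge) j i where "j < l" "i < k - 2" "x = Inr ({j, Suc j mod l}, i)"
      unfolding loose_cycle_verts_def exp_verts_def cycle_verts_def cycle_edges_def by blast
    then show ?thesis
    proof cases
      case vertex
      then show ?thesis using balanced unfolding vertex(2) card_exp_map_fibre_Inl by simp
    next
      case edge
      have "card {y\<in>exp_verts k V E. exp_map pos y = x} = card {e\<in>E. pos ` e = {j, Suc j mod l}}"
        unfolding edge(3) by (rule card_exp_map_fibre_Inr[OF edge(2)])
      also have "\<dots> = card {w\<in>V. w \<noteq> r \<and> pos ` {w, par w} = {j, Suc j mod l}}"
        unfolding E by (rule card_par_edges_filter)
      finally show ?thesis using balanced edge(1) by simp
    qed
  qed
  then show ?thesis using hom by blast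
qed

lemma eventually_powr_le_div_ln_sq:
  "\<exists>n0. \<forall>n\<ge>n0. C * real n powr (3/4) \<le> real n / (ln (real n))\<^sup>2"
proof -
  have "eventually (\<lambda>n. C * real n powr (3/4) \<le> real n / (ln (real n))\<^sup>2) sequentially"
    by real_asymp
  then show ?thesis unfolding eventually_sequentially .
qed

lemma loose_cycle_blowup_embedding:
  assumes T: "is_tree V E" and deg: "max_degree V E \<le> \<Delta>" and l: "odd l" "3 \<le> l"
    and err: "placement_error \<Delta> l * real (card V) powr (3/4) \<le> \<epsilon>"
    and m: "m = nat \<lfloor>real (card V) / real l + \<epsilon>\<rfloor>"
  shows "\<exists>\<psi>. is_embedding \<psi> (exp_verts k V E) (exp_edges k E)
           (blowup_verts m (loose_cycle_verts k l)) (blowup_edges m (loose_cycle_edges k l)) \<and>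
         (\<forall>x\<in>loose_cycle_verts k l.
            \<bar>real (card (\<psi> ` exp_verts k V E \<inter> cluster m x)) - real (card V) / real l\<bar> \<le> \<epsilon>)"
proof -
  obtain h where hom: "is_homomorphism h (exp_verts k V E) (exp_edges k E)
      (loose_cycle_verts k l) (loose_cycle_edges k l)"
    and fibres: "\<forall>x\<in>loose_cycle_verts k l.
        \<bar>real (card {y\<in>exp_verts k V E. h y = x}) - real (card V) / real l\<bar>
          \<le> placement_error \<Delta> l * real (card V) powr (3/4)"
    using tree_balanced_homomorphism_to_loose_cycle[OF T deg l] by blast
  have G: "is_graph V E" using T unfolding is_tree_def by simp
  then have "finite V" "finite E" unfolding is_graph_def
    by (auto intro: finite_subset[of E "Pow V"])
  then have fin: "finite (exp_verts k V E)" by (rule finite_exp_verts)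
  have sub: "f \<subseteq> exp_verts k V E" if "f \<in> exp_edges k E" for f
    using exp_edges_subset[OF _ that] G unfolding is_graph_def by blast
  have close: "\<bar>real (card {y\<in>exp_verts k V E. h y = x}) - real (card V) / real l\<bar> \<le> \<epsilon>"
    if "x \<in> loose_cycle_verts k l" for x
    using fibres that err by fastforce
  have "card {y\<in>exp_verts k V E. h y = x} \<le> m" if "x \<in> loose_cycle_verts k l" for x
    unfolding m by (intro le_nat_floor) (use abs_le_D1[OF close[OF that]] in linarith)
  then obtain \<psi> where "is_embedding \<psi> (exp_verts k V E) (exp_edges k E)
      (blowup_verts m (loose_cycle_verts k l)) (blowup_edges m (loose_cycle_edges k l))"
    and "\<forall>x\<in>loose_cycle_verts k l. card (\<psi> ` exp_verts k V E \<inter> cluster m x) =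
        card {y\<in>exp_verts k V E. h y = x}"
    using exists_blowup_embedding[OF fin sub hom] by blast
  then show ?thesis using close by auto
qed

theorem lemma4p3:
  fixes k :: nat
  assumes "k \<ge> 3"
  shows "\<forall>\<Delta> l :: nat. \<Delta> \<ge> 2 \<and> odd l \<and> l \<ge> 3 \<longrightarrow>
    (\<exists>n0::nat. \<forall>n\<ge>n0. \<forall>(V :: nat set) (E :: nat set set).
       is_tree V E \<and> card V = n \<and> max_degree V E \<le> \<Delta> \<longrightarrow>
       (let m = nat \<lfloor>real n / real l + real n / (ln (real n))^2\<rfloor>;
            HV = blowup_verts m (loose_cycle_verts k l);
            HE = blowup_edges m (loose_cycle_edges k l)
        in \<exists>\<psi>. is_embedding \<psi> (exp_verts k V E) (exp_edges k E) HV HE \<and>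
             (\<forall>x\<in>loose_cycle_verts k l.
                real n / real l - real ((l - 1) * (k - 1) - 1) * real n / (ln (real n))^2
                  - real (k - 2)
                  \<le> real (card (\<psi> ` exp_verts k V E \<inter> cluster m x)) \<and>
                real (card (\<psi> ` exp_verts k V E \<inter> cluster m x))
                  \<le> real n / real l + real n / (ln (real n))^2)))"
proof (intro allI impI, goal_cases)
  case (1 \<Delta> l)
  then have l: "odd l" "3 \<le> l" by auto
  obtain n0 where n0: "\<forall>n\<ge>n0. placement_error \<Delta> l * real n powr (3/4) \<le> real n / (ln (real n))\<^sup>2"
    using eventually_powr_le_div_ln_sq by blast
  have "2 * 2 \<le> (l - 1) * (k - 1)" using l assms by (intro mult_le_mono) auto
  then have "1 \<le> (l - 1) * (k - 1) - 1" by linarith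
  then have c: "1 \<le> real ((l - 1) * (k - 1) - 1)" by simp
  have lower: "real n / real l - real ((l - 1) * (k - 1) - 1) * real n / (ln (real n))\<^sup>2
      - real (k - 2) \<le> real n / real l - real n / (ln (real n))\<^sup>2" for n
    using mult_right_mono[OF c, of "real n / (ln (real n))\<^sup>2"] by simp
  show ?case
  proof (intro exI[of _ n0] allI impI, goal_cases)
    case (1 n V E)
    then have T: "is_tree V E" and deg: "max_degree V E \<le> \<Delta>" and n: "card V = n" "n0 \<le> n" by auto
    have err: "placement_error \<Delta> l * real (card V) powr (3/4) \<le> real n / (ln (real n))\<^sup>2"
      using n0 n by simp
    show ?case
      using loose_cycle_blowup_embedding[OF T deg l err refl] lower[of n]
      unfolding n(1) Let_def by (fastforce simp: abs_le_iff)
  qed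
qed

end
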